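(* Let $G$ be a $3$-edge colorable cubic graph, and let $\{G_i\}$ be a decomposition of $G$ along nontrivial $2$-edge cuts or $3$-edge cuts. Then $K'(G,3)=\prod_i K'(G_i,3)$.
   Context: Graphs are finite; multiple edges allowed, loops not. Let $G$ be cubic. For a $3$-edge cut $E_C=\{s_{11}s_{21},s_{12}s_{22},s_{13}s_{23}\}$ with the $s_{1j}$ on one side and the $s_{2j}$ on the other, let $G_1',G_2'$ be the subgraphs induced on the two sides of $G\setminus E_C$; $G_i$ is obtained from $G_i'$ by adding a new vertex $v_i$ joined to $s_{i1},s_{i2},s_{i3}$. For a $2$-edge cut $E_C=\{s_{11}s_{21},s_{12}s_{22}\}$, $G_i$ is obtained from $G_i'$ by adding the edge $s_{i1}s_{i2}$. The cut is nontrivial if both $G_1$ and $G_2$ have fewer vertices than $G$. A decomposition of $G$ along such cuts is a collection of graphs obtained from $\{G\}$ by repeatedly replacing a member by the two graphs $G_1,G_2$ arising from a nontrivial $2$- or $3$-edge cut of it. A proper $3$-edge coloring uses colors $\{1,2,3\}$ with adjacent edges colored differently; an edge-Kempe chain (colors $a\neq b$) is a connected component of the subgraph of edges colored $a$ or $b$, and an edge-Kempe switch swaps $a,b$ on one chain. $K'(G,3)$ is the number of classes of proper $3$-edge colorings under the equivalence generated by edge-Kempe switches. *)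

theory Defs
  imports Main "HOL-Library.Multiset"
begin

text \<open>Finite multigraphs without loops. Vertices and edges are natural numbers;
  each edge has a set of two distinct endpoints (so parallel edges are allowed,
  loops are not).\<close>

record mgraph =
  verts :: "nat set"
  edges :: "nat set"
  ends  :: "nat \<Rightarrow> nat set"

definition wf_graph :: "mgraph \<Rightarrow> bool" where
  "wf_graph G \<longleftrightarrow> finite (verts G) \<and> finite (edges G) \<and>
     (\<forall>e\<in>edges G. ends G e \<subseteq> verts G \<and> card (ends G e) = 2)"

definition degree :: "mgraph \<Rightarrow> nat \<Rightarrow> nat" where
  "degree G v = card {e\<in>edges G. v \<in> ends G e}"

definition cubic :: "mgraph \<Rightarrow> bool" where
  "cubic G \<longleftrightarrow> wf_graph G \<and> (\<forall>v\<in>verts G. degree G v = 3)"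

definition proper_col :: "mgraph \<Rightarrow> (nat \<Rightarrow> nat) \<Rightarrow> bool" where
  "proper_col G c \<longleftrightarrow>
     (\<forall>e. e \<notin> edges G \<longrightarrow> c e = 0) \<and>
     (\<forall>e\<in>edges G. c e \<in> {1,2,3}) \<and>
     (\<forall>e\<in>edges G. \<forall>f\<in>edges G. e \<noteq> f \<and> ends G e \<inter> ends G f \<noteq> {} \<longrightarrow> c e \<noteq> c f)"

definition colorings :: "mgraph \<Rightarrow> (nat \<Rightarrow> nat) set" where
  "colorings G = {c. proper_col G c}"

definition colorable3 :: "mgraph \<Rightarrow> bool" where
  "colorable3 G \<longleftrightarrow> colorings G \<noteq> {}"

definition ab_link :: "mgraph \<Rightarrow> (nat \<Rightarrow> nat) \<Rightarrow> nat \<Rightarrow> nat \<Rightarrow> (nat \<times> nat) set" where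
  "ab_link G c a b = {(x,y). x \<in> edges G \<and> y \<in> edges G \<and> c x \<in> {a,b} \<and> c y \<in> {a,b}
                             \<and> ends G x \<inter> ends G y \<noteq> {}}"

definition kempe_chain :: "mgraph \<Rightarrow> (nat \<Rightarrow> nat) \<Rightarrow> nat \<Rightarrow> nat \<Rightarrow> nat set \<Rightarrow> bool" where
  "kempe_chain G c a b K \<longleftrightarrow> a \<noteq> b \<and> a \<in> {1,2,3} \<and> b \<in> {1,2,3} \<and>
     (\<exists>e\<in>edges G. c e \<in> {a,b} \<and>
        K = {f\<in>edges G. c f \<in> {a,b} \<and> (e,f) \<in> (ab_link G c a b)\<^sup>*})"

definition kempe_swap :: "(nat \<Rightarrow> nat) \<Rightarrow> nat \<Rightarrow> nat \<Rightarrow> nat set \<Rightarrow> nat \<Rightarrow> nat" where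
  "kempe_swap c a b K = (\<lambda>f. if f \<in> K then (if c f = a then b else if c f = b then a else c f) else c f)"

definition kempe_step :: "mgraph \<Rightarrow> (nat \<Rightarrow> nat) \<Rightarrow> (nat \<Rightarrow> nat) \<Rightarrow> bool" where
  "kempe_step G c d \<longleftrightarrow> proper_col G c \<and>
     (\<exists>a b K. kempe_chain G c a b K \<and> d = kempe_swap c a b K)"

definition kempe_rel :: "mgraph \<Rightarrow> ((nat \<Rightarrow> nat) \<times> (nat \<Rightarrow> nat)) set" where
  "kempe_rel G = (({(c,d). kempe_step G c d} \<union> {(c,d). kempe_step G d c})\<^sup>*)
                  \<inter> (colorings G \<times> colorings G)"

definition Kp :: "mgraph \<Rightarrow> nat" where
  "Kp G = card (colorings G // kempe_rel G)"

definition crossing :: "mgraph \<Rightarrow> nat set \<Rightarrow> nat set \<Rightarrow> nat set" where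
  "crossing G S1 S2 = {e\<in>edges G. ends G e \<inter> S1 \<noteq> {} \<and> ends G e \<inter> S2 \<noteq> {}}"

definition inside :: "mgraph \<Rightarrow> nat set \<Rightarrow> nat set" where
  "inside G S = {e\<in>edges G. ends G e \<subseteq> S}"

text \<open>G1 = G[S1] plus a fresh vertex v1 joined to x1,x2,x3 (the new edges reuse the
  names e1,e2,e3); symmetrically for G2.\<close>

definition split3 :: "mgraph \<Rightarrow> mgraph \<Rightarrow> mgraph \<Rightarrow> bool" where
  "split3 G G1 G2 \<longleftrightarrow>
    (\<exists>S1 S2 e1 e2 e3 x1 x2 x3 y1 y2 y3 v1 v2.
       S1 \<union> S2 = verts G \<and> S1 \<inter> S2 = {} \<and>
       distinct [e1,e2,e3] \<and> crossing G S1 S2 = {e1,e2,e3} \<and>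
       ends G e1 = {x1,y1} \<and> ends G e2 = {x2,y2} \<and> ends G e3 = {x3,y3} \<and>
       x1 \<in> S1 \<and> x2 \<in> S1 \<and> x3 \<in> S1 \<and> y1 \<in> S2 \<and> y2 \<in> S2 \<and> y3 \<in> S2 \<and>
       v1 \<notin> verts G \<and> v2 \<notin> verts G \<and>
       G1 = \<lparr>verts = S1 \<union> {v1}, edges = inside G S1 \<union> {e1,e2,e3},
             ends = (ends G)(e1 := {x1,v1}, e2 := {x2,v1}, e3 := {x3,v1})\<rparr> \<and>
       G2 = \<lparr>verts = S2 \<union> {v2}, edges = inside G S2 \<union> {e1,e2,e3},
             ends = (ends G)(e1 := {y1,v2}, e2 := {y2,v2}, e3 := {y3,v2})\<rparr>)"

text \<open>Splitting along a 2-edge cut {e1,e2}, e_j = x_j y_j: G1 = G[S1] plus the edge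
  x1 x2 (named e1), G2 = G[S2] plus the edge y1 y2 (named e1). Endpoints of the new
  edges must be distinct, as loops are not allowed.\<close>

definition split2 :: "mgraph \<Rightarrow> mgraph \<Rightarrow> mgraph \<Rightarrow> bool" where
  "split2 G G1 G2 \<longleftrightarrow>
    (\<exists>S1 S2 e1 e2 x1 x2 y1 y2.
       S1 \<union> S2 = verts G \<and> S1 \<inter> S2 = {} \<and>
       e1 \<noteq> e2 \<and> crossing G S1 S2 = {e1,e2} \<and>
       ends G e1 = {x1,y1} \<and> ends G e2 = {x2,y2} \<and>
       x1 \<in> S1 \<and> x2 \<in> S1 \<and> y1 \<in> S2 \<and> y2 \<in> S2 \<and> x1 \<noteq> x2 \<and> y1 \<noteq> y2 \<and>
       G1 = \<lparr>verts = S1, edges = inside G S1 \<union> {e1}, ends = (ends G)(e1 := {x1,x2})\<rparr> \<and>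
       G2 = \<lparr>verts = S2, edges = inside G S2 \<union> {e1}, ends = (ends G)(e1 := {y1,y2})\<rparr>)"

definition nontrivial_split :: "mgraph \<Rightarrow> mgraph \<Rightarrow> mgraph \<Rightarrow> bool" where
  "nontrivial_split G G1 G2 \<longleftrightarrow>
     (split2 G G1 G2 \<or> split3 G G1 G2) \<and>
     card (verts G1) < card (verts G) \<and> card (verts G2) < card (verts G)"

inductive decomposition :: "mgraph \<Rightarrow> mgraph multiset \<Rightarrow> bool" for G where
  base: "decomposition G {#G#}"
| step: "decomposition G M \<Longrightarrow> H \<in># M \<Longrightarrow> nontrivial_split H H1 H2 \<Longrightarrow>
         decomposition G (M - {#H#} + {#H1, H2#})"

end

theory Submission
  imports Defs "HOL-Combinatorics.Permutations"
begin

text \<open>Each color class of a proper 3-edge coloring of a cubic graph is a perfect matching, so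
  counting it at the vertices of one side shows that the edges of a 3-edge cut get three distinct
  colors and the edges of a 2-edge cut get the same color. Instead of single Kempe chains we
  switch arbitrary unions of \<open>(a,b)\<close>-chains; such switches are composites of edge-Kempe
  switches, restrict from \<open>G\<close> to \<open>G\<^sub>1\<close> and \<open>G\<^sub>2\<close>, and lift back from either side to \<open>G\<close>,
  at the price of a color permutation on the other side. That permutation fixes the colors on
  the cut, so it is trivial for a 3-edge cut and a single switch inside the side for a
  2-edge cut. Together with the fact that colorings of \<open>G\<^sub>1\<close> and \<open>G\<^sub>2\<close> can be glued after a
  global recoloring, restriction is a bijection from the Kempe classes of \<open>G\<close> onto pairs of
  Kempe classes of \<open>G\<^sub>1\<close> and \<open>G\<^sub>2\<close>; induction over the decomposition gives the product.\<close>

section \<open>Switches on unions of Kempe chains\<close>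

text \<open>Unlike single chains, unions of \<open>(a,b)\<close>-chains restrict and lift well across a cut.\<close>

definition kempe_closed :: "mgraph \<Rightarrow> (nat \<Rightarrow> nat) \<Rightarrow> nat \<Rightarrow> nat \<Rightarrow> nat set \<Rightarrow> bool" where
  "kempe_closed G c a b U \<longleftrightarrow> U \<subseteq> {e\<in>edges G. c e \<in> {a,b}} \<and>
     (\<forall>e\<in>U. \<forall>f\<in>edges G. c f \<in> {a,b} \<and> ends G e \<inter> ends G f \<noteq> {} \<longrightarrow> f \<in> U)"

definition closed_switch :: "mgraph \<Rightarrow> ((nat \<Rightarrow> nat) \<times> (nat \<Rightarrow> nat)) set" where
  "closed_switch G = {(c, d). proper_col G c \<and> (\<exists>a b U. a \<noteq> b \<and> a \<in> {1,2,3} \<and> b \<in> {1,2,3} \<and>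
      kempe_closed G c a b U \<and> d = kempe_swap c a b U)}"

definition chain_through :: "mgraph \<Rightarrow> (nat \<Rightarrow> nat) \<Rightarrow> nat \<Rightarrow> nat \<Rightarrow> nat \<Rightarrow> nat set" where
  "chain_through G c a b e = {f\<in>edges G. c f \<in> {a,b} \<and> (e, f) \<in> (ab_link G c a b)\<^sup>*}"

lemma kempe_swap_apply: "kempe_swap c a b U f = (if f \<in> U then transpose a b (c f) else c f)"
  by (simp add: kempe_swap_def transpose_def)

lemma kempe_swap_involutory [simp]: "kempe_swap (kempe_swap c a b U) a b U = c"
  by (auto simp: kempe_swap_def)

lemma kempe_swap_in_pair_iff: "kempe_swap c a b U f \<in> {a,b} \<longleftrightarrow> c f \<in> {a,b}"
  by (auto simp: kempe_swap_def)

lemma kempe_closed_kempe_swap_iff: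
  "kempe_closed G (kempe_swap c a b U) a b V \<longleftrightarrow> kempe_closed G c a b V"
  unfolding kempe_closed_def using kempe_swap_in_pair_iff[of c a b U] by blast

lemma proper_col_kempe_swap:
  assumes p: "proper_col G c" and ab: "a \<in> {1,2,3}" "b \<in> {1,2,3}" and cl: "kempe_closed G c a b U"
  shows "proper_col G (kempe_swap c a b U)"
proof -
  have U: "U \<subseteq> {e\<in>edges G. c e \<in> {a,b}}" using cl by (simp add: kempe_closed_def)
  have boundary: "c y \<notin> {a,b}"
    if "x \<in> U" "y \<notin> U" "y \<in> edges G" "ends G x \<inter> ends G y \<noteq> {}" for x y
    using cl that unfolding kempe_closed_def by blast
  have "kempe_swap c a b U e \<noteq> kempe_swap c a b U f"
    if "e \<in> edges G" "f \<in> edges G" "e \<noteq> f" "ends G e \<inter> ends G f \<noteq> {}" for e f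
  proof -
    have "c e \<noteq> c f" using p that by (auto simp: proper_col_def)
    then show ?thesis
      using U boundary[of e f] boundary[of f e] that
      by (auto simp: kempe_swap_apply transpose_def Int_commute)
  qed
  moreover have "kempe_swap c a b U e \<in> {1,2,3}" if "e \<in> edges G" for e
    using p ab that by (auto simp: kempe_swap_def proper_col_def)
  ultimately show ?thesis
    using p U by (auto simp: proper_col_def kempe_swap_def)
qed

lemma kempe_chain_iff:
  "kempe_chain G c a b K \<longleftrightarrow> a \<noteq> b \<and> a \<in> {1,2,3} \<and> b \<in> {1,2,3} \<and>
     (\<exists>e\<in>edges G. c e \<in> {a,b} \<and> K = chain_through G c a b e)"
  by (simp add: kempe_chain_def chain_through_def)

lemma kempe_closed_chain_through: "kempe_closed G c a b (chain_through G c a b e)"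
  unfolding kempe_closed_def chain_through_def
proof (intro conjI ballI impI)
  fix f g assume f: "f \<in> {f\<in>edges G. c f \<in> {a,b} \<and> (e, f) \<in> (ab_link G c a b)\<^sup>*}"
    and g: "g \<in> edges G" "c g \<in> {a,b} \<and> ends G f \<inter> ends G g \<noteq> {}"
  then have "(f, g) \<in> ab_link G c a b" by (auto simp: ab_link_def)
  then have "(e, g) \<in> (ab_link G c a b)\<^sup>*" using f by (auto intro: rtrancl_into_rtrancl)
  with g show "g \<in> {f\<in>edges G. c f \<in> {a,b} \<and> (e, f) \<in> (ab_link G c a b)\<^sup>*}" by auto
qed auto

lemma chain_through_subset:
  assumes cl: "kempe_closed G c a b U" and "e \<in> U"
  shows "chain_through G c a b e \<subseteq> U"
proof
  fix f assume "f \<in> chain_through G c a b e"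
  then have "(e, f) \<in> (ab_link G c a b)\<^sup>*" by (simp add: chain_through_def)
  then show "f \<in> U"
  proof (induction rule: rtrancl_induct)
    case base show ?case by fact
  next
    case (step y z) then show ?case using cl by (auto simp: kempe_closed_def ab_link_def)
  qed
qed

lemma kempe_closed_Diff_chain_through:
  assumes cl: "kempe_closed G c a b U"
  shows "kempe_closed G c a b (U - chain_through G c a b e)"
  unfolding kempe_closed_def
proof (intro conjI ballI impI)
  show "U - chain_through G c a b e \<subseteq> {e \<in> edges G. c e \<in> {a, b}}"
    using cl by (auto simp: kempe_closed_def)
next
  fix f g assume f: "f \<in> U - chain_through G c a b e" and g: "g \<in> edges G"
    and fg: "c g \<in> {a,b} \<and> ends G f \<inter> ends G g \<noteq> {}"
  have "f \<in> edges G" "c f \<in> {a,b}" using f cl by (auto simp: kempe_closed_def)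
  then have "(g, f) \<in> ab_link G c a b" using g fg by (auto simp: ab_link_def)
  moreover have "f \<notin> chain_through G c a b e" using f by blast
  ultimately have "g \<notin> chain_through G c a b e"
    using \<open>f \<in> edges G\<close> \<open>c f \<in> {a,b}\<close>
    by (auto simp: chain_through_def intro: rtrancl_into_rtrancl)
  moreover have "g \<in> U" using cl f g fg by (auto simp: kempe_closed_def)
  ultimately show "g \<in> U - chain_through G c a b e" by blast
qed

lemma kempe_swap_Diff: "K \<subseteq> U \<Longrightarrow> kempe_swap (kempe_swap c a b K) a b (U - K) = kempe_swap c a b U"
  by (auto simp: kempe_swap_def intro!: ext)

lemma kempe_swap_closed_steps:
  assumes "finite U" "proper_col G c" "a \<noteq> b" "a \<in> {1,2,3}" "b \<in> {1,2,3}" "kempe_closed G c a b U"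
  shows "(c, kempe_swap c a b U) \<in> {(c, d). kempe_step G c d}\<^sup>*"
  using assms
proof (induction "card U" arbitrary: c U rule: less_induct)
  case less
  show ?case
  proof (cases "U = {}")
    case True then show ?thesis by (simp add: kempe_swap_def)
  next
    case False
    then obtain e where e: "e \<in> U" by blast
    define K where "K = chain_through G c a b e"
    define c' where "c' = kempe_swap c a b K"
    have "e \<in> edges G" "c e \<in> {a,b}" using e less.prems(6) by (auto simp: kempe_closed_def)
    then have "kempe_chain G c a b K" "e \<in> K"
      using less.prems(3-5) by (auto simp: kempe_chain_iff K_def chain_through_def)
    then have step: "kempe_step G c c'" and proper': "proper_col G c'"
      using less.prems(2,4,5) kempe_closed_chain_through
      by (auto simp: kempe_step_def c'_def K_def kempe_chain_iff intro: proper_col_kempe_swap)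
    have KU: "K \<subseteq> U" using chain_through_subset[OF less.prems(6) e] by (simp add: K_def)
    have "card (U - K) < card U"
      using \<open>e \<in> K\<close> e less.prems(1) by (intro psubset_card_mono) auto
    moreover have "kempe_closed G c' a b (U - K)"
      using kempe_closed_Diff_chain_through[OF less.prems(6)]
      by (simp add: c'_def K_def kempe_closed_kempe_swap_iff)
    ultimately have "(c', kempe_swap c' a b (U - K)) \<in> {(c, d). kempe_step G c d}\<^sup>*"
      using less.hyps proper' less.prems(1,3-5) by blast
    then show ?thesis
      using step kempe_swap_Diff[OF KU] by (simp add: c'_def converse_rtrancl_into_rtrancl)
  qed
qed

lemma closed_switch_if_kempe_step:
  assumes "kempe_step G c d"
  shows "(c, d) \<in> closed_switch G"
proof -
  obtain a b e where "proper_col G c" "a \<noteq> b" "a \<in> {1,2,3}" "b \<in> {1,2,3}"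
    "d = kempe_swap c a b (chain_through G c a b e)"
    using assms by (auto simp: kempe_step_def kempe_chain_iff)
  then show ?thesis
    using kempe_closed_chain_through unfolding closed_switch_def by blast
qed

lemma closed_switch_proper:
  "(c, d) \<in> closed_switch G \<Longrightarrow> proper_col G c \<and> proper_col G d"
  by (auto simp: closed_switch_def intro: proper_col_kempe_swap)

lemma closed_switch_sym:
  assumes "(c, d) \<in> closed_switch G"
  shows "(d, c) \<in> closed_switch G"
proof -
  obtain a b U where h: "proper_col G c" "a \<noteq> b" "a \<in> {1,2,3}" "b \<in> {1,2,3}"
    "kempe_closed G c a b U" "d = kempe_swap c a b U"
    using assms by (auto simp: closed_switch_def)
  then have "proper_col G d" "kempe_closed G d a b U" "c = kempe_swap d a b U"
    by (simp_all add: proper_col_kempe_swap kempe_closed_kempe_swap_iff)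
  with h show ?thesis unfolding closed_switch_def by blast
qed

lemma rtrancl_closed_switch_proper:
  "(c, d) \<in> (closed_switch G)\<^sup>* \<Longrightarrow> proper_col G c \<Longrightarrow> proper_col G d"
  by (induction rule: rtrancl_induct) (auto dest: closed_switch_proper)

lemma closed_switch_kempe_steps:
  assumes "finite (edges G)" "(c, d) \<in> closed_switch G"
  shows "(c, d) \<in> {(c, d). kempe_step G c d}\<^sup>*"
proof -
  obtain a b U where "proper_col G c" "a \<noteq> b" "a \<in> {1,2,3}" "b \<in> {1,2,3}"
    "kempe_closed G c a b U" "d = kempe_swap c a b U"
    using assms(2) by (auto simp: closed_switch_def)
  moreover have "finite U"
    using \<open>kempe_closed G c a b U\<close> assms(1) by (auto simp: kempe_closed_def intro: finite_subset)
  ultimately show ?thesis using kempe_swap_closed_steps by blast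
qed

lemma kempe_rel_iff:
  assumes fin: "finite (edges G)"
  shows "(c, d) \<in> kempe_rel G \<longleftrightarrow> proper_col G c \<and> (c, d) \<in> (closed_switch G)\<^sup>*"
proof -
  let ?S = "{(c, d). kempe_step G c d} \<union> {(c, d). kempe_step G d c}"
  have "?S \<subseteq> closed_switch G"
    using closed_switch_if_kempe_step closed_switch_sym by blast
  moreover have "closed_switch G \<subseteq> ?S\<^sup>*"
    using closed_switch_kempe_steps[OF fin] rtrancl_mono[of "{(c, d). kempe_step G c d}" ?S]
    by blast
  ultimately have "?S\<^sup>* = (closed_switch G)\<^sup>*"
    by (metis rtrancl_mono rtrancl_subset_rtrancl subset_antisym)
  then show ?thesis
    by (auto simp: kempe_rel_def colorings_def dest: rtrancl_closed_switch_proper)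
qed

lemma equiv_kempe_rel:
  assumes fin: "finite (edges G)"
  shows "equiv (colorings G) (kempe_rel G)"
proof -
  have "sym ((closed_switch G)\<^sup>*)"
    by (rule sym_rtrancl) (auto simp: sym_def intro: closed_switch_sym)
  then show ?thesis
    unfolding equiv_def refl_on_def sym_def trans_def kempe_rel_iff[OF fin]
    by (auto simp: colorings_def kempe_rel_def dest: rtrancl_closed_switch_proper
        intro: rtrancl_trans)
qed

lemma kempe_rel_proper: "(c, d) \<in> kempe_rel G \<Longrightarrow> proper_col G c \<and> proper_col G d"
  by (simp add: kempe_rel_def colorings_def)

lemma kempe_rel_if_closed_switch:
  "finite (edges G) \<Longrightarrow> (c, d) \<in> closed_switch G \<Longrightarrow> (c, d) \<in> kempe_rel G"
  by (simp add: kempe_rel_iff closed_switch_proper)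

lemma kempe_rel_refl: "finite (edges G) \<Longrightarrow> proper_col G c \<Longrightarrow> (c, c) \<in> kempe_rel G"
  by (simp add: kempe_rel_iff)

lemma kempe_rel_sym: "finite (edges G) \<Longrightarrow> (c, d) \<in> kempe_rel G \<Longrightarrow> (d, c) \<in> kempe_rel G"
  using equiv_kempe_rel unfolding equiv_def sym_def by blast

lemma kempe_rel_trans:
  "finite (edges G) \<Longrightarrow> (c, d) \<in> kempe_rel G \<Longrightarrow> (d, e) \<in> kempe_rel G \<Longrightarrow> (c, e) \<in> kempe_rel G"
  using equiv_kempe_rel unfolding equiv_def trans_def by blast

lemma closed_switch_transpose:
  assumes p: "proper_col G c" and ab: "a \<noteq> b" "a \<in> {1,2,3}" "b \<in> {1,2,3}"
  shows "(c, transpose a b \<circ> c) \<in> closed_switch G"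
proof -
  let ?U = "{f\<in>edges G. c f \<in> {a,b}}"
  have "kempe_closed G c a b ?U" by (auto simp: kempe_closed_def)
  moreover have "transpose a b \<circ> c = kempe_swap c a b ?U"
  proof
    fix f show "(transpose a b \<circ> c) f = kempe_swap c a b ?U f"
      using p ab by (cases "f \<in> edges G") (auto simp: kempe_swap_apply proper_col_def transpose_def)
  qed
  ultimately show ?thesis using p ab unfolding closed_switch_def by blast
qed

lemma closed_switch_recolor_edge:
  assumes p: "proper_col H d" and f: "f \<in> edges H" and x: "x \<in> {1,2,3}"
  obtains d' where "(d, d') \<in> (closed_switch H)\<^sup>*" "d' f = x" "\<And>g. d g \<notin> {d f, x} \<Longrightarrow> d' g = d g"
proof (cases "d f = x")
  case True
  then show ?thesis using that[of d] by simp
next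
  case False
  have "d f \<in> {1,2,3}" using p f by (simp add: proper_col_def)
  then have "(d, transpose (d f) x \<circ> d) \<in> closed_switch H"
    using closed_switch_transpose[OF p False _ x] by simp
  then show ?thesis using that[of "transpose (d f) x \<circ> d"] by auto
qed

definition restrict_col :: "nat set \<Rightarrow> (nat \<Rightarrow> nat) \<Rightarrow> nat \<Rightarrow> nat" where
  "restrict_col E c = (\<lambda>f. if f \<in> E then c f else 0)"

lemma restrict_col_kempe_swap:
  "restrict_col E (kempe_swap c a b U) = kempe_swap (restrict_col E c) a b (U \<inter> E)"
  by (auto simp: restrict_col_def kempe_swap_def intro!: ext)

lemma restrict_col_kempe_swap_disjoint:
  "U \<inter> E = {} \<Longrightarrow> restrict_col E (kempe_swap c a b U) = restrict_col E c"
  by (auto simp: restrict_col_def kempe_swap_def intro!: ext)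

lemma restrict_col_kempe_swap_all:
  "a \<noteq> 0 \<Longrightarrow> b \<noteq> 0 \<Longrightarrow> U \<inter> E = {f\<in>E. c f \<in> {a,b}} \<Longrightarrow>
   restrict_col E (kempe_swap c a b U) = transpose a b \<circ> restrict_col E c"
  by (auto simp: restrict_col_def kempe_swap_apply transpose_def intro!: ext)

lemma permutes_eq_id: "\<pi> permutes S \<Longrightarrow> (\<And>x. x \<in> S \<Longrightarrow> \<pi> x = x) \<Longrightarrow> \<pi> = id"
  by (auto simp: permutes_def fun_eq_iff)

lemma distinct_if_color_counts_same_parity:
  fixes x y z m :: nat
  assumes "x \<in> {1,2,3}" "y \<in> {1,2,3}" "z \<in> {1,2,3}"
    and "\<And>k. k \<in> {1,2,3} \<Longrightarrow> (of_bool (x = k) + of_bool (y = k) + of_bool (z = k)) mod 2 = m"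
  shows "x \<noteq> y \<and> x \<noteq> z \<and> y \<noteq> z"
  using assms(4)[of 1] assms(4)[of 2] assms(4)[of 3] assms(1-3) by auto

lemma eq_if_color_counts_same_parity:
  fixes x y m :: nat
  assumes "x \<in> {1,2,3}" "y \<in> {1,2,3}"
    and "\<And>k. k \<in> {1,2,3} \<Longrightarrow> (of_bool (x = k) + of_bool (y = k)) mod 2 = m"
  shows "x = y"
  using assms(3)[of 1] assms(3)[of 2] assms(3)[of 3] assms(1,2) by auto

lemma three_colors_eq:
  fixes x y z :: nat
  assumes "x \<in> {1,2,3}" "y \<in> {1,2,3}" "z \<in> {1,2,3}" "x \<noteq> y" "x \<noteq> z" "y \<noteq> z"
  shows "{x, y, z} = {1,2,3}"
  using assms by auto

lemma obtain_other_colors: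
  fixes k :: nat
  assumes "k \<in> {1,2,3}"
  obtains a b where "{k, a, b} = {1,2,3}" "a \<noteq> b" "a \<noteq> k" "b \<noteq> k"
proof -
  consider "k = 1" | "k = 2" | "k = 3" using assms by blast
  then show ?thesis
  proof cases
    case 1 show ?thesis by (rule that[of 2 3]) (auto simp: 1)
  next
    case 2 show ?thesis by (rule that[of 1 3]) (auto simp: 2)
  next
    case 3 show ?thesis by (rule that[of 1 2]) (auto simp: 3)
  qed
qed

lemma permutes_three_fixing:
  assumes \<pi>: "\<pi> permutes {k, a, b}" and kab: "a \<noteq> b" "a \<noteq> k" "b \<noteq> k"
    and fix_k: "\<pi> k = k"
  shows "\<pi> = id \<or> \<pi> = transpose a b"
proof -
  have "\<pi> a \<in> {k, a, b}" "\<pi> b \<in> {k, a, b}"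
    using permutes_in_image[OF \<pi>] by simp_all
  moreover have "\<pi> a \<noteq> \<pi> k" "\<pi> b \<noteq> \<pi> k" "\<pi> a \<noteq> \<pi> b"
    using kab inj_eq[OF permutes_inj[OF \<pi>]] by simp_all
  ultimately have "(\<pi> a = a \<and> \<pi> b = b) \<or> (\<pi> a = b \<and> \<pi> b = a)"
    using fix_k by auto
  then show ?thesis
  proof
    assume "\<pi> a = a \<and> \<pi> b = b"
    then show ?thesis using permutes_eq_id[OF \<pi>] fix_k by auto
  next
    assume swap: "\<pi> a = b \<and> \<pi> b = a"
    have "\<pi> x = transpose a b x" for x
    proof (cases "x \<in> {k, a, b}")
      case True
      then show ?thesis using kab swap fix_k by (auto simp: transpose_def)
    next
      case False
      then show ?thesis using permutes_not_in[OF \<pi>] by (auto simp: transpose_def)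
    qed
    then show ?thesis by auto
  qed
qed

lemma card_incident_color:
  assumes cub: "cubic G" and p: "proper_col G c" and v: "v \<in> verts G" and k: "k \<in> {1,2,3}"
  shows "card {e\<in>edges G. v \<in> ends G e \<and> c e = k} = 1"
proof -
  let ?I = "{e\<in>edges G. v \<in> ends G e}"
  have inj: "inj_on c ?I"
  proof (rule inj_onI)
    fix e f assume "e \<in> ?I" "f \<in> ?I" "c e = c f"
    then show "e = f" using p unfolding proper_col_def by blast
  qed
  have "card (c ` ?I) = card ?I" by (rule card_image[OF inj])
  also have "\<dots> = card {1,2,3::nat}" using cub v unfolding cubic_def degree_def by simp
  finally have card3: "card (c ` ?I) = card {1,2,3::nat}" .
  have sub: "c ` ?I \<subseteq> {1,2,3}" using p by (auto simp: proper_col_def)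
  have "c ` ?I = {1,2,3}" by (rule card_subset_eq[OF _ sub card3]) simp
  then have "k \<in> c ` ?I" using k by simp
  then obtain e where e: "k = c e" "e \<in> ?I" by (rule imageE)
  have "{e\<in>edges G. v \<in> ends G e \<and> c e = k} = {e}"
  proof (intro set_eqI iffI)
    fix f assume "f \<in> {e\<in>edges G. v \<in> ends G e \<and> c e = k}"
    then have "f \<in> ?I" "c f = c e" using e(1) by auto
    then show "f \<in> {e}" using inj_onD[OF inj _ _ e(2)] by blast
  qed (use e in auto)
  then show ?thesis by simp
qed

lemma sum_card_incident:
  assumes "finite S" "finite F"
  shows "(\<Sum>v\<in>S. card {e\<in>F. v \<in> ends G e}) = (\<Sum>e\<in>F. card (ends G e \<inter> S))"
proof -
  have "(\<Sum>v\<in>S. card {e\<in>F. v \<in> ends G e}) = (\<Sum>v\<in>S. \<Sum>e\<in>F. of_bool (v \<in> ends G e))"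
    using assms(2) by (simp add: Int_def)
  also have "\<dots> = (\<Sum>e\<in>F. \<Sum>v\<in>S. of_bool (v \<in> ends G e))" by (rule sum.swap)
  also have "\<dots> = (\<Sum>e\<in>F. card (ends G e \<inter> S))"
    using assms(1) by (simp add: Int_def conj_commute)
  finally show ?thesis .
qed

lemma Image_image_class:
  assumes "equiv A R" "trans S" "\<And>x y. (x, y) \<in> R \<Longrightarrow> (f x, f y) \<in> S" "x \<in> A"
  shows "S `` (f ` (R `` {x})) = S `` {f x}"
proof -
  have "(x, x) \<in> R" using assms(1,4) by (simp add: equiv_def refl_on_def)
  then show ?thesis using assms(2,3) by (auto dest: transD)
qed

lemma card_quotient_eq_mult:
  assumes eq: "equiv A R" "equiv A1 R1" "equiv A2 R2"
    and maps: "f ` A \<subseteq> A1" "g ` A \<subseteq> A2"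
    and resp: "\<And>x y. (x, y) \<in> R \<Longrightarrow> (f x, f y) \<in> R1 \<and> (g x, g y) \<in> R2"
    and determined: "\<And>x y. x \<in> A \<Longrightarrow> y \<in> A \<Longrightarrow> (f x, f y) \<in> R1 \<Longrightarrow> (g x, g y) \<in> R2 \<Longrightarrow> (x, y) \<in> R"
    and onto: "\<And>x1 x2. x1 \<in> A1 \<Longrightarrow> x2 \<in> A2 \<Longrightarrow> \<exists>x\<in>A. (f x, x1) \<in> R1 \<and> (g x, x2) \<in> R2"
  shows "card (A // R) = card (A1 // R1) * card (A2 // R2)"
proof -
  define \<Phi> where "\<Phi> X = (R1 `` (f ` X), R2 `` (g ` X))" for X
  have trans: "trans R1" "trans R2" using eq(2,3) by (simp_all add: equiv_def)
  have "(f x, f y) \<in> R1" "(g x, g y) \<in> R2" if "(x, y) \<in> R" for x y using resp[OF that] by simp_all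
  then have \<Phi>: "\<Phi> (R `` {x}) = (R1 `` {f x}, R2 `` {g x})" if "x \<in> A" for x
    unfolding \<Phi>_def using Image_image_class[OF eq(1) trans(1) _ that]
      Image_image_class[OF eq(1) trans(2) _ that] by simp
  have "inj_on \<Phi> (A // R)"
  proof (rule inj_onI)
    fix X Y assume X: "X \<in> A // R" and Y: "Y \<in> A // R" and XY: "\<Phi> X = \<Phi> Y"
    obtain x where x: "x \<in> A" "X = R `` {x}" using X by (auto elim: quotientE)
    obtain y where y: "y \<in> A" "Y = R `` {y}" using Y by (auto elim: quotientE)
    have classes: "R1 `` {f x} = R1 `` {f y}" "R2 `` {g x} = R2 `` {g y}"
      using XY \<Phi> x y by auto
    have "f x \<in> A1" "f y \<in> A1" "g x \<in> A2" "g y \<in> A2" using maps x y by auto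
    then have "(f x, f y) \<in> R1" "(g x, g y) \<in> R2"
      using classes eq_equiv_class_iff[OF eq(2)] eq_equiv_class_iff[OF eq(3)] by blast+
    then have "(x, y) \<in> R" using determined x y by blast
    then show "X = Y" using x y equiv_class_eq[OF eq(1)] by simp
  qed
  moreover have "\<Phi> ` (A // R) = A1 // R1 \<times> A2 // R2"
  proof
    show "\<Phi> ` (A // R) \<subseteq> A1 // R1 \<times> A2 // R2"
    proof
      fix Z assume "Z \<in> \<Phi> ` (A // R)"
      then obtain x where "x \<in> A" "Z = \<Phi> (R `` {x})" by (auto elim!: quotientE)
      then show "Z \<in> A1 // R1 \<times> A2 // R2" using \<Phi> maps by (auto intro!: quotientI)
    qed
  next
    show "A1 // R1 \<times> A2 // R2 \<subseteq> \<Phi> ` (A // R)"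
    proof
      fix Z assume "Z \<in> A1 // R1 \<times> A2 // R2"
      then obtain x1 x2 where "x1 \<in> A1" "x2 \<in> A2" "Z = (R1 `` {x1}, R2 `` {x2})"
        by (auto elim!: quotientE)
      moreover obtain x where "x \<in> A" "(f x, x1) \<in> R1" "(g x, x2) \<in> R2"
        using onto \<open>x1 \<in> A1\<close> \<open>x2 \<in> A2\<close> by blast
      ultimately have "Z = \<Phi> (R `` {x})"
        using \<Phi> equiv_class_eq[OF eq(2)] equiv_class_eq[OF eq(3)] by simp
      then show "Z \<in> \<Phi> ` (A // R)" using \<open>x \<in> A\<close> by (auto intro: quotientI)
    qed
  qed
  ultimately have "card (A // R) = card (A1 // R1 \<times> A2 // R2)" by (metis card_image)
  then show ?thesis by (simp add: card_cartesian_product)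
qed

section \<open>Gluing Kempe classes along a cut\<close>

locale kempe_restriction =
  fixes G H :: mgraph and E E' :: "nat set"
  assumes finite_edges: "finite (edges G)" "finite (edges H)"
    and proper_col_restrict: "proper_col G c \<Longrightarrow> proper_col H (restrict_col E c)"
    and kempe_closed_restrict:
      "\<lbrakk>proper_col G c; a \<in> {1,2,3}; b \<in> {1,2,3}; a \<noteq> b; kempe_closed G c a b U\<rbrakk>
       \<Longrightarrow> kempe_closed H (restrict_col E c) a b (U \<inter> E)"
    and kempe_closed_lift:
      "\<lbrakk>proper_col G c; a \<in> {1,2,3}; b \<in> {1,2,3}; a \<noteq> b; kempe_closed H (restrict_col E c) a b V\<rbrakk>
       \<Longrightarrow> \<exists>U. kempe_closed G c a b U \<and> U \<inter> E = V \<and> (U \<inter> E' = {} \<or> U \<inter> E' = {f\<in>E'. c f \<in> {a,b}})"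
begin

lemma closed_switch_restrict:
  assumes "(c, d) \<in> closed_switch G"
  shows "(restrict_col E c, restrict_col E d) \<in> closed_switch H"
proof -
  obtain a b U where ab: "a \<noteq> b" "a \<in> {1,2,3}" "b \<in> {1,2,3}"
    and h: "proper_col G c" "kempe_closed G c a b U" "d = kempe_swap c a b U"
    using assms by (auto simp: closed_switch_def)
  then have "proper_col H (restrict_col E c)" "kempe_closed H (restrict_col E c) a b (U \<inter> E)"
    "restrict_col E d = kempe_swap (restrict_col E c) a b (U \<inter> E)"
    by (simp_all add: proper_col_restrict kempe_closed_restrict restrict_col_kempe_swap)
  with ab show ?thesis unfolding closed_switch_def by blast
qed

lemma kempe_rel_restrict:
  assumes "(c, d) \<in> kempe_rel G"
  shows "(restrict_col E c, restrict_col E d) \<in> kempe_rel H"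
proof -
  have "proper_col G c" "(c, d) \<in> (closed_switch G)\<^sup>*"
    using assms kempe_rel_iff[OF finite_edges(1)] by auto
  moreover from this(2) have "(restrict_col E c, restrict_col E d) \<in> (closed_switch H)\<^sup>*"
    by (induction rule: rtrancl_induct) (auto intro: rtrancl_into_rtrancl closed_switch_restrict)
  ultimately show ?thesis
    using kempe_rel_iff[OF finite_edges(2)] proper_col_restrict by blast
qed

lemma closed_switch_lift:
  assumes p: "proper_col G c" and s: "(restrict_col E c, z) \<in> closed_switch H"
  obtains d a b where "(c, d) \<in> closed_switch G" "restrict_col E d = z" "a \<in> {1,2,3}" "b \<in> {1,2,3}"
    "restrict_col E' d = restrict_col E' c \<or> restrict_col E' d = transpose a b \<circ> restrict_col E' c"
proof -
  obtain a b V where ab: "a \<noteq> b" "a \<in> {1,2,3}" "b \<in> {1,2,3}"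
    and V: "kempe_closed H (restrict_col E c) a b V" "z = kempe_swap (restrict_col E c) a b V"
    using s by (auto simp: closed_switch_def)
  obtain U where U: "kempe_closed G c a b U" "U \<inter> E = V"
    "U \<inter> E' = {} \<or> U \<inter> E' = {f\<in>E'. c f \<in> {a,b}}"
    using kempe_closed_lift[OF p ab(2,3,1) V(1)] by blast
  have switch: "(c, kempe_swap c a b U) \<in> closed_switch G"
    using p ab U(1) unfolding closed_switch_def by blast
  have restr: "restrict_col E (kempe_swap c a b U) = z"
    using V(2) U(2) by (simp add: restrict_col_kempe_swap)
  have "a \<noteq> 0" "b \<noteq> 0" using ab by auto
  then have "restrict_col E' (kempe_swap c a b U) = restrict_col E' c \<or>
      restrict_col E' (kempe_swap c a b U) = transpose a b \<circ> restrict_col E' c"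
    using U(3) restrict_col_kempe_swap_disjoint restrict_col_kempe_swap_all by blast
  then show ?thesis by (rule that[OF switch restr ab(2,3)])
qed

lemma kempe_rel_lift:
  assumes "(x, y) \<in> (closed_switch H)\<^sup>*" "proper_col G c" "restrict_col E c = x"
  shows "\<exists>d. (c, d) \<in> kempe_rel G \<and> restrict_col E d = y"
  using assms(1)
proof (induction rule: rtrancl_induct)
  case base
  then show ?case using kempe_rel_refl[OF finite_edges(1) assms(2)] assms(3) by blast
next
  case (step y z)
  then obtain d where d: "(c, d) \<in> kempe_rel G" "restrict_col E d = y" by blast
  then have "proper_col G d" using kempe_rel_proper by blast
  moreover have "(restrict_col E d, z) \<in> closed_switch H" using step.hyps(2) d(2) by simp
  ultimately obtain d' a b where "(d, d') \<in> closed_switch G" "restrict_col E d' = z"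
    "a \<in> {1,2,3}" "b \<in> {1,2,3}"
    "restrict_col E' d' = restrict_col E' d \<or> restrict_col E' d' = transpose a b \<circ> restrict_col E' d"
    by (rule closed_switch_lift)
  then show ?case
    using d(1) kempe_rel_trans[OF finite_edges(1)] kempe_rel_if_closed_switch[OF finite_edges(1)]
    by blast
qed

end

text \<open>Lifting a switch of \<open>G\<^sub>2\<close> may transpose two colors on the whole \<open>E1\<close> side
  (\<open>closed_switch_lift\<close>); the first assumption says that this is invisible up to Kempe
  equivalence.\<close>

locale kempe_gluing =
  side1: kempe_restriction G G1 E1 E2 + side2: kempe_restriction G G2 E2 E1
  for G G1 G2 :: mgraph and E1 E2 :: "nat set" +
  assumes kempe_rel_if_permuted:
    "\<lbrakk>proper_col G d; proper_col G c; restrict_col E2 d = restrict_col E2 c; \<pi> permutes {1,2,3};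
      restrict_col E1 d = \<pi> \<circ> restrict_col E1 c\<rbrakk> \<Longrightarrow> (d, c) \<in> kempe_rel G"
    and glue: "\<lbrakk>c1 \<in> colorings G1; c2 \<in> colorings G2\<rbrakk> \<Longrightarrow>
      \<exists>c\<in>colorings G. (restrict_col E1 c, c1) \<in> kempe_rel G1 \<and> (restrict_col E2 c, c2) \<in> kempe_rel G2"
begin

lemma kempe_rel_if_side2_path:
  assumes "(x, y) \<in> (closed_switch G2)\<^sup>*" "proper_col G c" "restrict_col E2 c = y"
  shows "\<lbrakk>proper_col G d; restrict_col E2 d = x; \<pi> permutes {1,2,3};
          restrict_col E1 d = \<pi> \<circ> restrict_col E1 c\<rbrakk> \<Longrightarrow> (d, c) \<in> kempe_rel G"
  using assms(1)
proof (induction arbitrary: d \<pi> rule: converse_rtrancl_induct)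
  case base
  then show ?case using kempe_rel_if_permuted[OF base(1) assms(2) _ base(3,4)] assms(3) by simp
next
  case (step x x')
  have "(restrict_col E2 d, x') \<in> closed_switch G2" using step.hyps(1) step.prems(2) by simp
  then obtain d' a b where d': "(d, d') \<in> closed_switch G" "restrict_col E2 d' = x'"
    "a \<in> {1,2,3}" "b \<in> {1,2,3}"
    "restrict_col E1 d' = restrict_col E1 d \<or> restrict_col E1 d' = transpose a b \<circ> restrict_col E1 d"
    by (rule side2.closed_switch_lift[OF step.prems(1)])
  from d'(5) obtain \<pi>' where "\<pi>' permutes {1,2,3}" "restrict_col E1 d' = \<pi>' \<circ> restrict_col E1 c"
  proof
    assume "restrict_col E1 d' = restrict_col E1 d"
    then show ?thesis using that[OF step.prems(3)] step.prems(4) by (simp add: comp_def)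
  next
    assume "restrict_col E1 d' = transpose a b \<circ> restrict_col E1 d"
    then have "restrict_col E1 d' = (transpose a b \<circ> \<pi>) \<circ> restrict_col E1 c"
      using step.prems(4) by (simp add: comp_def)
    moreover have "transpose a b \<circ> \<pi> permutes {1,2,3}"
      using permutes_compose[OF step.prems(3) permutes_swap_id[OF d'(3,4)]] .
    ultimately show ?thesis using that by blast
  qed
  moreover have "proper_col G d'" using closed_switch_proper[OF d'(1)] by simp
  ultimately have "(d', c) \<in> kempe_rel G" using step.IH d'(2) by simp
  then show ?case
    using kempe_rel_trans[OF side1.finite_edges(1) kempe_rel_if_closed_switch[OF side1.finite_edges(1) d'(1)]]
    by simp
qed

lemma kempe_rel_of_restrictions:
  assumes c: "proper_col G c" and c': "proper_col G c'"
    and r1: "(restrict_col E1 c, restrict_col E1 c') \<in> kempe_rel G1"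
    and r2: "(restrict_col E2 c, restrict_col E2 c') \<in> kempe_rel G2"
  shows "(c, c') \<in> kempe_rel G"
proof -
  have "(restrict_col E1 c, restrict_col E1 c') \<in> (closed_switch G1)\<^sup>*"
    using r1 kempe_rel_iff[OF side1.finite_edges(2)] by blast
  then obtain d where d: "(c, d) \<in> kempe_rel G" "restrict_col E1 d = restrict_col E1 c'"
    using side1.kempe_rel_lift[OF _ c refl] by blast
  have "(restrict_col E2 d, restrict_col E2 c) \<in> kempe_rel G2"
    by (rule side2.kempe_rel_restrict[OF kempe_rel_sym[OF side1.finite_edges(1) d(1)]])
  then have "(restrict_col E2 d, restrict_col E2 c') \<in> kempe_rel G2"
    using kempe_rel_trans[OF side2.finite_edges(2) _ r2] by blast
  then have "(restrict_col E2 d, restrict_col E2 c') \<in> (closed_switch G2)\<^sup>*"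
    using kempe_rel_iff[OF side2.finite_edges(2)] by blast
  moreover have "proper_col G d" using kempe_rel_proper[OF d(1)] by simp
  ultimately have "(d, c') \<in> kempe_rel G"
    using kempe_rel_if_side2_path[OF _ c' refl _ refl permutes_id] d(2) by simp
  then show ?thesis using kempe_rel_trans[OF side1.finite_edges(1) d(1)] by blast
qed

theorem Kp_eq_mult: "Kp G = Kp G1 * Kp G2"
  unfolding Kp_def
proof (rule card_quotient_eq_mult[where f = "restrict_col E1" and g = "restrict_col E2"])
  show "equiv (colorings G) (kempe_rel G)" "equiv (colorings G1) (kempe_rel G1)"
    "equiv (colorings G2) (kempe_rel G2)"
    using side1.finite_edges side2.finite_edges by (simp_all add: equiv_kempe_rel)
  show "restrict_col E1 ` colorings G \<subseteq> colorings G1" "restrict_col E2 ` colorings G \<subseteq> colorings G2"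
    using side1.proper_col_restrict side2.proper_col_restrict by (auto simp: colorings_def)
  show "(restrict_col E1 x, restrict_col E1 y) \<in> kempe_rel G1 \<and>
      (restrict_col E2 x, restrict_col E2 y) \<in> kempe_rel G2" if "(x, y) \<in> kempe_rel G" for x y
    using side1.kempe_rel_restrict side2.kempe_rel_restrict that by blast
  show "(x, y) \<in> kempe_rel G"
    if "x \<in> colorings G" "y \<in> colorings G" "(restrict_col E1 x, restrict_col E1 y) \<in> kempe_rel G1"
      "(restrict_col E2 x, restrict_col E2 y) \<in> kempe_rel G2" for x y
    using kempe_rel_of_restrictions that by (simp add: colorings_def)
qed (fact glue)

end

section \<open>Cuts of cubic graphs\<close>

locale cubic_cut =
  fixes G :: mgraph and S1 S2 C :: "nat set"
  assumes cubic: "cubic G"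
    and cover: "S1 \<union> S2 = verts G" and disjoint: "S1 \<inter> S2 = {}"
    and crossing_eq: "crossing G S1 S2 = C"
begin

lemma finite_edges: "finite (edges G)"
  using cubic by (simp add: cubic_def wf_graph_def)

lemma ends_subset: "e \<in> edges G \<Longrightarrow> ends G e \<subseteq> S1 \<union> S2"
  using cubic cover by (simp add: cubic_def wf_graph_def)

lemma card_ends: "e \<in> edges G \<Longrightarrow> card (ends G e) = 2"
  using cubic by (simp add: cubic_def wf_graph_def)

lemma swap_sides: "cubic_cut G S2 S1 C"
proof
  show "crossing G S2 S1 = C" using crossing_eq unfolding crossing_def by blast
qed (use cubic cover disjoint in auto)

lemma cut_subset_edges: "C \<subseteq> edges G"
  using crossing_eq unfolding crossing_def by blast

lemma edge_cases: "f \<in> edges G \<Longrightarrow> f \<in> inside G S1 \<or> f \<in> inside G S2 \<or> f \<in> C"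
  using ends_subset[of f] crossing_eq unfolding crossing_def inside_def by blast

lemma cut_not_inside: "f \<in> C \<Longrightarrow> f \<notin> inside G S1 \<and> f \<notin> inside G S2"
  using crossing_eq disjoint unfolding crossing_def inside_def by blast

lemma inside_disjoint:
  assumes "f \<in> inside G S1"
  shows "f \<notin> inside G S2"
proof
  assume "f \<in> inside G S2"
  with assms have "ends G f \<subseteq> S1 \<inter> S2" "card (ends G f) = 2"
    using card_ends by (auto simp: inside_def)
  then show False using disjoint by simp
qed

lemma card_ends_inter_mod2:
  assumes e: "e \<in> edges G"
  shows "card (ends G e \<inter> S1) mod 2 = of_bool (e \<in> C)"
proof -
  obtain x y where xy: "ends G e = {x, y}" "x \<noteq> y"
    using card_ends[OF e] by (metis card_2_iff)
  moreover have "x \<in> S1 \<union> S2" "y \<in> S1 \<union> S2" using ends_subset[OF e] xy by auto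
  ultimately show ?thesis
    using e disjoint crossing_eq[symmetric] unfolding crossing_def
    by (cases "x \<in> S1"; cases "y \<in> S1") (auto simp: Int_insert_left)
qed

lemma card_cut_color_mod2:
  assumes p: "proper_col G c" and k: "k \<in> {1,2,3}"
  shows "card {e\<in>C. c e = k} mod 2 = card S1 mod 2"
proof -
  define F where "F = {e\<in>edges G. c e = k}"
  have fin: "finite S1" "finite F"
    using cubic cover finite_edges by (auto simp: cubic_def wf_graph_def F_def intro: finite_subset)
  have "card S1 = (\<Sum>v\<in>S1. 1)" by simp
  also have "\<dots> = (\<Sum>v\<in>S1. card {e\<in>F. v \<in> ends G e})"
  proof (rule sum.cong)
    fix v assume "v \<in> S1"
    then have "v \<in> verts G" using cover by blast
    moreover have "{e\<in>F. v \<in> ends G e} = {e\<in>edges G. v \<in> ends G e \<and> c e = k}"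
      by (auto simp: F_def)
    ultimately show "1 = card {e\<in>F. v \<in> ends G e}"
      using card_incident_color[OF cubic p _ k] by simp
  qed simp
  also have "\<dots> = (\<Sum>e\<in>F. card (ends G e \<inter> S1))"
    by (rule sum_card_incident[OF fin])
  finally have "card S1 mod 2 = (\<Sum>e\<in>F. card (ends G e \<inter> S1) mod 2) mod 2"
    by (simp add: mod_sum_eq)
  also have "\<dots> = (\<Sum>e\<in>F. of_bool (e \<in> C)) mod 2"
    using card_ends_inter_mod2 by (simp add: F_def)
  also have "\<dots> = card (F \<inter> {e. e \<in> C}) mod 2"
    using fin(2) by simp
  also have "F \<inter> {e. e \<in> C} = {e\<in>C. c e = k}"
    using cut_subset_edges by (auto simp: F_def)
  finally show ?thesis ..
qed

end

section \<open>Three-edge cuts\<close>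

locale cut3 = cubic_cut G S1 S2 "{e1, e2, e3}"
  for G :: mgraph and S1 S2 :: "nat set" and e1 e2 e3 :: nat +
  fixes x1 x2 x3 y1 y2 y3 v1 v2 :: nat and G1 G2 :: mgraph
  assumes distinct_cut: "distinct [e1, e2, e3]"
    and ends_cut: "ends G e1 = {x1, y1}" "ends G e2 = {x2, y2}" "ends G e3 = {x3, y3}"
    and near_ends: "x1 \<in> S1" "x2 \<in> S1" "x3 \<in> S1"
    and far_ends: "y1 \<in> S2" "y2 \<in> S2" "y3 \<in> S2"
    and fresh: "v1 \<notin> verts G" "v2 \<notin> verts G"
    and G1_def: "G1 = \<lparr>verts = S1 \<union> {v1}, edges = inside G S1 \<union> {e1, e2, e3},
             ends = (ends G)(e1 := {x1, v1}, e2 := {x2, v1}, e3 := {x3, v1})\<rparr>"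
    and G2_def: "G2 = \<lparr>verts = S2 \<union> {v2}, edges = inside G S2 \<union> {e1, e2, e3},
             ends = (ends G)(e1 := {y1, v2}, e2 := {y2, v2}, e3 := {y3, v2})\<rparr>"
begin

lemma cut3_swap_sides: "cut3 G S2 S1 e1 e2 e3 y1 y2 y3 x1 x2 x3 v2 v1 G2 G1"
  unfolding cut3_def cut3_axioms_def
  using swap_sides distinct_cut ends_cut near_ends far_ends fresh G1_def G2_def
  by (simp add: insert_commute)

lemma edges_G1: "edges G1 = inside G S1 \<union> {e1, e2, e3}"
  by (simp add: G1_def)

lemma edges_G2: "edges G2 = inside G S2 \<union> {e1, e2, e3}"
  by (simp add: G2_def)

lemma edges_G1_subset: "edges G1 \<subseteq> edges G"
  using cut_subset_edges by (auto simp: edges_G1 inside_def)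

lemma edges_G1_G2_inter: "f \<in> edges G1 \<Longrightarrow> f \<in> edges G2 \<Longrightarrow> f \<in> {e1, e2, e3}"
  using inside_disjoint by (auto simp: edges_G1 edges_G2)

lemma edges_G1_G2_cover: "f \<in> edges G \<Longrightarrow> f \<in> edges G1 \<or> f \<in> edges G2"
  using edge_cases by (auto simp: edges_G1 edges_G2)

lemma ends_G1:
  assumes "f \<in> edges G1"
  shows "ends G1 f = (ends G f \<inter> S1) \<union> (if f \<in> {e1, e2, e3} then {v1} else {})"
proof (cases "f \<in> {e1, e2, e3}")
  case True
  moreover have "v1 \<notin> S1" using fresh cover by blast
  ultimately show ?thesis
    using distinct_cut ends_cut near_ends far_ends disjoint by (auto simp: G1_def)
next
  case False
  then have "f \<in> inside G S1" using assms by (simp add: edges_G1)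
  with False show ?thesis by (auto simp: G1_def inside_def)
qed

lemma adjacent_G1_iff:
  assumes "f \<in> edges G1" "g \<in> edges G1"
  shows "ends G1 f \<inter> ends G1 g \<noteq> {} \<longleftrightarrow>
    ends G f \<inter> ends G g \<inter> S1 \<noteq> {} \<or> (f \<in> {e1, e2, e3} \<and> g \<in> {e1, e2, e3})"
proof -
  have "v1 \<notin> S1" using fresh cover by blast
  then show ?thesis using ends_G1[OF assms(1)] ends_G1[OF assms(2)] by auto
qed

lemma edge_near_in_G1: "f \<in> edges G \<Longrightarrow> w \<in> ends G f \<Longrightarrow> w \<in> S1 \<Longrightarrow> f \<in> edges G1"
  using edge_cases[of f] disjoint by (auto simp: edges_G1 inside_def)

lemma edge_G1_far_in_cut: "f \<in> edges G1 \<Longrightarrow> w \<in> ends G f \<Longrightarrow> w \<in> S2 \<Longrightarrow> f \<in> {e1, e2, e3}"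
  using disjoint by (auto simp: edges_G1 inside_def)

lemma adjacent_near_in_G1:
  assumes "f \<in> edges G" "g \<in> edges G" "w \<in> ends G f" "w \<in> ends G g" "w \<in> S1"
  shows "f \<in> edges G1" "g \<in> edges G1" "ends G1 f \<inter> ends G1 g \<noteq> {}"
  using assms edge_near_in_G1 adjacent_G1_iff by blast+

lemma cut_colors_distinct_by_parity:
  assumes p: "proper_col G c"
  shows "c e1 \<noteq> c e2 \<and> c e1 \<noteq> c e3 \<and> c e2 \<noteq> c e3"
proof -
  have col: "c e1 \<in> {1,2,3}" "c e2 \<in> {1,2,3}" "c e3 \<in> {1,2,3}"
    using p cut_subset_edges by (auto simp: proper_col_def)
  have "(of_bool (c e1 = k) + of_bool (c e2 = k) + of_bool (c e3 = k)) mod 2 = card S1 mod 2"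
    if "k \<in> {1,2,3}" for k :: nat
  proof -
    have "of_bool (c e1 = k) + of_bool (c e2 = k) + of_bool (c e3 = k) =
        (\<Sum>e\<in>{e1, e2, e3}. of_bool (c e = k) :: nat)"
      using distinct_cut by simp
    also have "\<dots> = card {e\<in>{e1, e2, e3}. c e = k}" by (simp add: Int_def)
    finally show ?thesis using card_cut_color_mod2[OF p that] by simp
  qed
  then show ?thesis using distinct_if_color_counts_same_parity[OF col] by blast
qed

lemma inj_on_cut_colors:
  assumes "proper_col G c"
  shows "inj_on c {e1, e2, e3}"
  using cut_colors_distinct_by_parity[OF assms] by (auto simp: inj_on_def)

lemma cut_colors_distinct_G1:
  assumes p: "proper_col G1 d" and "f \<in> {e1, e2, e3}" "g \<in> {e1, e2, e3}" "f \<noteq> g"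
  shows "d f \<noteq> d g"
proof -
  have "f \<in> edges G1" "g \<in> edges G1" "v1 \<in> ends G1 f \<inter> ends G1 g"
    using assms(2,3) ends_G1[of f] ends_G1[of g] by (auto simp: edges_G1)
  then show ?thesis using p assms(4) unfolding proper_col_def by blast
qed

lemma proper_col_restrict_G1:
  assumes p: "proper_col G c"
  shows "proper_col G1 (restrict_col (edges G1) c)"
  unfolding proper_col_def
proof (intro conjI allI impI ballI)
  fix e assume "e \<in> edges G1"
  then show "restrict_col (edges G1) c e \<in> {1,2,3}"
    using p edges_G1_subset by (auto simp: restrict_col_def proper_col_def)
next
  fix e f assume e: "e \<in> edges G1" and f: "f \<in> edges G1"
    and ef: "e \<noteq> f \<and> ends G1 e \<inter> ends G1 f \<noteq> {}"
  then have "ends G e \<inter> ends G f \<noteq> {} \<or> (e \<in> {e1, e2, e3} \<and> f \<in> {e1, e2, e3})"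
    using adjacent_G1_iff by blast
  then have "c e \<noteq> c f"
  proof
    assume "ends G e \<inter> ends G f \<noteq> {}"
    then show ?thesis using p ef e f edges_G1_subset unfolding proper_col_def by blast
  next
    assume "e \<in> {e1, e2, e3} \<and> f \<in> {e1, e2, e3}"
    then show ?thesis using cut_colors_distinct_by_parity[OF p] ef by auto
  qed
  then show "restrict_col (edges G1) c e \<noteq> restrict_col (edges G1) c f"
    using e f by (simp add: restrict_col_def)
qed (simp add: restrict_col_def)

text \<open>Otherwise the switch on \<open>U\<close> would give two cut edges the same color.\<close>

lemma kempe_closed_cut_edge:
  assumes p: "proper_col G c" and ab: "a \<in> {1,2,3}" "b \<in> {1,2,3}" and cl: "kempe_closed G c a b U"
    and f: "f \<in> U" "f \<in> {e1, e2, e3}" and g: "g \<in> {e1, e2, e3}" "c g \<in> {a,b}"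
  shows "g \<in> U"
proof (rule ccontr)
  assume gU: "g \<notin> U"
  have "f \<noteq> g" using f(1) gU by blast
  then have "c f \<noteq> c g" using inj_onD[OF inj_on_cut_colors[OF p] _ f(2) g(1)] by blast
  moreover have "c f \<in> {a,b}" using f cl by (auto simp: kempe_closed_def)
  ultimately have "transpose a b (c f) = c g" using g(2) by (auto simp: transpose_def)
  then have "kempe_swap c a b U f = kempe_swap c a b U g"
    using f(1) gU by (simp add: kempe_swap_apply)
  then show False
    using inj_onD[OF inj_on_cut_colors[OF proper_col_kempe_swap[OF p ab cl]] _ f(2) g(1)]
      \<open>f \<noteq> g\<close> by blast
qed

lemma kempe_closed_restrict_G1:
  assumes p: "proper_col G c" and ab: "a \<in> {1,2,3}" "b \<in> {1,2,3}" and cl: "kempe_closed G c a b U"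
  shows "kempe_closed G1 (restrict_col (edges G1) c) a b (U \<inter> edges G1)"
  unfolding kempe_closed_def
proof (intro conjI ballI impI)
  show "U \<inter> edges G1 \<subseteq> {e \<in> edges G1. restrict_col (edges G1) c e \<in> {a, b}}"
    using cl by (auto simp: kempe_closed_def restrict_col_def)
next
  fix f g assume f: "f \<in> U \<inter> edges G1" and g: "g \<in> edges G1"
    and fg: "restrict_col (edges G1) c g \<in> {a, b} \<and> ends G1 f \<inter> ends G1 g \<noteq> {}"
  have cg: "c g \<in> {a,b}" using fg g by (simp add: restrict_col_def)
  have "ends G f \<inter> ends G g \<noteq> {} \<or> (f \<in> {e1, e2, e3} \<and> g \<in> {e1, e2, e3})"
    using adjacent_G1_iff f g fg by blast
  then have "g \<in> U"
    using cl f g cg edges_G1_subset kempe_closed_cut_edge[OF p ab cl _ _ _ cg]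
    unfolding kempe_closed_def by blast
  then show "g \<in> U \<inter> edges G1" using g by blast
qed

lemma kempe_closed_G1_cut:
  assumes "kempe_closed G1 d a b V" "f \<in> V" "f \<in> {e1, e2, e3}" "g \<in> {e1, e2, e3}" "d g \<in> {a,b}"
  shows "g \<in> V"
proof -
  have G1: "f \<in> edges G1" "g \<in> edges G1" using assms(3,4) by (auto simp: edges_G1)
  then have "ends G1 f \<inter> ends G1 g \<noteq> {}" using adjacent_G1_iff assms(3,4) by blast
  then show ?thesis using assms(1,2,5) G1(2) unfolding kempe_closed_def by blast
qed

text \<open>The far side receives all of its \<open>(a,b)\<close>-edges, so on \<open>G\<^sub>2\<close> the lifted switch is a global
  transposition of colors.\<close>

definition lift_closed :: "(nat \<Rightarrow> nat) \<Rightarrow> nat \<Rightarrow> nat \<Rightarrow> nat set \<Rightarrow> nat set" where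
  "lift_closed c a b V =
     V \<union> (if V \<inter> {e1, e2, e3} = {} then {} else {f\<in>inside G S2. c f \<in> {a,b}})"

lemma kempe_closed_lift_closed:
  assumes cl: "kempe_closed G1 (restrict_col (edges G1) c) a b V"
  shows "kempe_closed G c a b (lift_closed c a b V)"
  unfolding kempe_closed_def
proof (intro conjI ballI impI)
  have V: "V \<subseteq> edges G1" "\<And>f. f \<in> V \<Longrightarrow> c f \<in> {a,b}"
    using cl by (auto simp: kempe_closed_def restrict_col_def)
  then show "lift_closed c a b V \<subseteq> {e\<in>edges G. c e \<in> {a,b}}"
    using edges_G1_subset by (auto simp: lift_closed_def inside_def)
  fix f g assume f: "f \<in> lift_closed c a b V" and g: "g \<in> edges G"
    and fg: "c g \<in> {a,b} \<and> ends G f \<inter> ends G g \<noteq> {}"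
  then obtain w where w: "w \<in> ends G f" "w \<in> ends G g" by blast
  have fE: "f \<in> edges G"
    using f V edges_G1_subset by (auto simp: lift_closed_def inside_def split: if_splits)
  have "w \<in> S1 \<or> w \<in> S2" using w ends_subset[OF fE] by blast
  then show "g \<in> lift_closed c a b V"
  proof
    assume wS1: "w \<in> S1"
    then have "f \<in> V" using f w(1) disjoint by (auto simp: lift_closed_def inside_def split: if_splits)
    moreover note adjacent_near_in_G1[OF fE g w wS1]
    ultimately have "g \<in> V" using cl fg unfolding kempe_closed_def by (simp add: restrict_col_def)
    then show ?thesis by (simp add: lift_closed_def)
  next
    assume wS2: "w \<in> S2"
    have meets: "V \<inter> {e1, e2, e3} \<noteq> {}"
      using f V(1) edge_G1_far_in_cut[OF _ w(1) wS2] by (auto simp: lift_closed_def split: if_splits)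
    have "g \<in> inside G S2 \<or> g \<in> {e1, e2, e3}"
      using edge_cases[OF g] w(2) wS2 disjoint by (auto simp: inside_def)
    moreover have "g \<in> V" if "g \<in> {e1, e2, e3}"
    proof -
      obtain h where "h \<in> V" "h \<in> {e1, e2, e3}" using meets by blast
      moreover have "restrict_col (edges G1) c g \<in> {a,b}"
        using fg that by (auto simp: restrict_col_def edges_G1)
      ultimately show ?thesis using kempe_closed_G1_cut[OF cl _ _ that] by blast
    qed
    ultimately show ?thesis using meets fg by (auto simp: lift_closed_def)
  qed
qed

lemma lift_closed_inter_G1:
  assumes cl: "kempe_closed G1 (restrict_col (edges G1) c) a b V"
  shows "lift_closed c a b V \<inter> edges G1 = V"
proof -
  have "V \<subseteq> edges G1" using cl by (auto simp: kempe_closed_def)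
  moreover have "inside G S2 \<inter> edges G1 = {}"
    using inside_disjoint cut_not_inside by (auto simp: edges_G1)
  ultimately show ?thesis by (auto simp: lift_closed_def)
qed

lemma lift_closed_inter_G2:
  assumes cl: "kempe_closed G1 (restrict_col (edges G1) c) a b V"
  shows "lift_closed c a b V \<inter> edges G2 = {} \<or>
    lift_closed c a b V \<inter> edges G2 = {f\<in>edges G2. c f \<in> {a,b}}"
proof (cases "V \<inter> {e1, e2, e3} = {}")
  case True
  moreover have "V \<subseteq> edges G1" using cl by (auto simp: kempe_closed_def)
  ultimately show ?thesis using edges_G1_G2_inter by (auto simp: lift_closed_def)
next
  case False
  then obtain h where h: "h \<in> V" "h \<in> {e1, e2, e3}" by blast
  have "V \<inter> edges G2 = {f\<in>{e1, e2, e3}. c f \<in> {a,b}}"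
  proof
    show "V \<inter> edges G2 \<subseteq> {f\<in>{e1, e2, e3}. c f \<in> {a,b}}"
      using cl edges_G1_G2_inter by (auto simp: kempe_closed_def restrict_col_def)
    show "{f\<in>{e1, e2, e3}. c f \<in> {a,b}} \<subseteq> V \<inter> edges G2"
      using kempe_closed_G1_cut[OF cl h] by (auto simp: restrict_col_def edges_G1 edges_G2)
  qed
  with False show ?thesis by (auto simp: lift_closed_def edges_G2)
qed

lemma incident_G1_near:
  assumes "v \<in> S1"
  shows "{e\<in>edges G1. v \<in> ends G1 e} = {e\<in>edges G. v \<in> ends G e}"
proof -
  have "v \<noteq> v1" using assms fresh cover by blast
  then show ?thesis
    using assms ends_G1 edges_G1_subset edge_near_in_G1 by (auto split: if_splits)
qed

lemma incident_G1_new: "{e\<in>edges G1. v1 \<in> ends G1 e} = {e1, e2, e3}"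
proof -
  have "v1 \<notin> S1" using fresh cover by blast
  then show ?thesis using ends_G1 by (auto simp: edges_G1 split: if_splits)
qed

lemma cubic_G1: "cubic G1"
  unfolding cubic_def wf_graph_def degree_def
proof (intro conjI ballI)
  have "finite (verts G)" using cubic by (simp add: cubic_def wf_graph_def)
  then show "finite (verts G1)" using cover by (simp add: G1_def) (metis finite_Un)
  show "finite (edges G1)" using finite_edges edges_G1_subset by (rule finite_subset[rotated])
next
  fix e assume e: "e \<in> edges G1"
  show "ends G1 e \<subseteq> verts G1" using ends_G1[OF e] by (auto simp: G1_def)
  show "card (ends G1 e) = 2"
  proof (cases "e \<in> {e1, e2, e3}")
    case True
    moreover have "x1 \<noteq> v1" "x2 \<noteq> v1" "x3 \<noteq> v1" using near_ends fresh cover by auto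
    ultimately show ?thesis using distinct_cut by (auto simp: G1_def)
  next
    case False
    then have "e \<in> inside G S1" using e by (simp add: edges_G1)
    with False show ?thesis using card_ends by (auto simp: G1_def inside_def)
  qed
next
  fix v assume "v \<in> verts G1"
  then consider "v = v1" | "v \<in> S1" by (auto simp: G1_def)
  then show "card {e\<in>edges G1. v \<in> ends G1 e} = 3"
  proof cases
    case 1 then show ?thesis using incident_G1_new distinct_cut by simp
  next
    case 2 then show ?thesis
      using incident_G1_near cubic cover by (auto simp: cubic_def degree_def)
  qed
qed

lemma kempe_restriction_G1: "kempe_restriction G G1 (edges G1) (edges G2)"
proof
  show "finite (edges G)" "finite (edges G1)"
    using finite_edges cubic_G1 by (simp_all add: cubic_def wf_graph_def)
  show "proper_col G1 (restrict_col (edges G1) c)" if "proper_col G c" for c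
    by (rule proper_col_restrict_G1[OF that])
  show "kempe_closed G1 (restrict_col (edges G1) c) a b (U \<inter> edges G1)"
    if "proper_col G c" "a \<in> {1,2,3}" "b \<in> {1,2,3}" "a \<noteq> b" "kempe_closed G c a b U"
    for c a b U
    by (rule kempe_closed_restrict_G1[OF that(1-3,5)])
  show "\<exists>U. kempe_closed G c a b U \<and> U \<inter> edges G1 = V \<and>
      (U \<inter> edges G2 = {} \<or> U \<inter> edges G2 = {f\<in>edges G2. c f \<in> {a,b}})"
    if "kempe_closed G1 (restrict_col (edges G1) c) a b V" for c a b V
    using kempe_closed_lift_closed[OF that] lift_closed_inter_G1[OF that]
      lift_closed_inter_G2[OF that] by blast
qed

lemma col_eq_if_restrictions_eq:
  assumes p: "proper_col G c" "proper_col G d"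
    and r: "restrict_col (edges G1) c = restrict_col (edges G1) d"
      "restrict_col (edges G2) c = restrict_col (edges G2) d"
  shows "c = d"
proof
  fix f
  show "c f = d f"
  proof (cases "f \<in> edges G")
    case True
    then consider "f \<in> edges G1" | "f \<in> edges G2" using edges_G1_G2_cover by blast
    then show ?thesis
      using fun_cong[OF r(1), of f] fun_cong[OF r(2), of f] by cases (auto simp: restrict_col_def)
  next
    case False
    then show ?thesis using p by (simp add: proper_col_def)
  qed
qed

lemma kempe_rel_if_permuted:
  assumes pd: "proper_col G d" and pc: "proper_col G c"
    and r2: "restrict_col (edges G2) d = restrict_col (edges G2) c"
    and \<pi>: "\<pi> permutes {1,2,3}" and r1: "restrict_col (edges G1) d = \<pi> \<circ> restrict_col (edges G1) c"
  shows "(d, c) \<in> kempe_rel G"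
proof -
  have fixes_cut: "\<pi> (c f) = c f" if "f \<in> {e1, e2, e3}" for f
  proof -
    have "f \<in> edges G1" "f \<in> edges G2" using that by (auto simp: edges_G1 edges_G2)
    then show ?thesis using fun_cong[OF r1, of f] fun_cong[OF r2, of f] by (simp add: restrict_col_def)
  qed
  have "c e1 \<in> {1,2,3}" "c e2 \<in> {1,2,3}" "c e3 \<in> {1,2,3}"
    using pc cut_subset_edges by (auto simp: proper_col_def)
  then have all_colors: "{c e1, c e2, c e3} = {1,2,3}"
    using cut_colors_distinct_by_parity[OF pc] by (rule_tac three_colors_eq) auto
  have "\<pi> x = x" if "x \<in> {1,2,3}" for x
  proof -
    from that all_colors have "x = c e1 \<or> x = c e2 \<or> x = c e3" by blast
    then show ?thesis using fixes_cut by blast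
  qed
  then have "\<pi> = id" by (rule permutes_eq_id[OF \<pi>])
  then have "restrict_col (edges G1) d = restrict_col (edges G1) c" using r1 by simp
  then have "d = c" using col_eq_if_restrictions_eq[OF pd pc _ r2] by simp
  then show ?thesis using kempe_rel_refl[OF finite_edges pc] by simp
qed

lemma col_differs_near:
  assumes p: "proper_col G1 (restrict_col (edges G1) c)" and fg: "f \<in> edges G" "g \<in> edges G" "f \<noteq> g"
    and w: "w \<in> ends G f" "w \<in> ends G g" "w \<in> S1"
  shows "c f \<noteq> c g"
proof -
  note adj = adjacent_near_in_G1[OF fg(1,2) w]
  then have "restrict_col (edges G1) c f \<noteq> restrict_col (edges G1) c g"
    using p fg(3) unfolding proper_col_def by blast
  with adj show ?thesis by (simp add: restrict_col_def)
qed

lemma proper_col_if_restrictions: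
  assumes p1: "proper_col G1 (restrict_col (edges G1) c)" and p2: "proper_col G2 (restrict_col (edges G2) c)"
    and zero: "\<And>f. f \<notin> edges G \<Longrightarrow> c f = 0"
  shows "proper_col G c"
  unfolding proper_col_def
proof (intro conjI allI impI ballI)
  fix f assume "f \<in> edges G"
  then consider "f \<in> edges G1" | "f \<in> edges G2" using edges_G1_G2_cover by blast
  then show "c f \<in> {1,2,3}" using p1 p2 by cases (auto simp: proper_col_def restrict_col_def)
next
  interpret far: cut3 G S2 S1 e1 e2 e3 y1 y2 y3 x1 x2 x3 v2 v1 G2 G1 by (rule cut3_swap_sides)
  fix f g assume f: "f \<in> edges G" and g: "g \<in> edges G" and fg: "f \<noteq> g \<and> ends G f \<inter> ends G g \<noteq> {}"
  then obtain w where w: "w \<in> ends G f" "w \<in> ends G g" by blast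
  then have "w \<in> S1 \<or> w \<in> S2" using ends_subset[OF f] by blast
  then show "c f \<noteq> c g"
    using col_differs_near[OF p1 f g _ w] far.col_differs_near[OF p2 f g _ w] fg by blast
qed (use zero in blast)

lemma align_cut_colors:
  assumes p1: "proper_col G1 c1" and p2: "proper_col G2 c2"
  obtains d where "(c2, d) \<in> (closed_switch G2)\<^sup>*" "\<And>f. f \<in> {e1, e2, e3} \<Longrightarrow> d f = c1 f"
proof -
  interpret far: cut3 G S2 S1 e1 e2 e3 y1 y2 y3 x1 x2 x3 v2 v1 G2 G1 by (rule cut3_swap_sides)
  have cut2: "e1 \<in> edges G2" "e2 \<in> edges G2" by (auto simp: edges_G2)
  have col1: "c1 e1 \<in> {1,2,3}" "c1 e2 \<in> {1,2,3}" "c1 e3 \<in> {1,2,3}"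
    using p1 by (auto simp: proper_col_def edges_G1)
  have dist1: "c1 e1 \<noteq> c1 e2" "c1 e1 \<noteq> c1 e3" "c1 e2 \<noteq> c1 e3"
    using cut_colors_distinct_G1[OF p1] distinct_cut by auto
  obtain da where da: "(c2, da) \<in> (closed_switch G2)\<^sup>*" "da e1 = c1 e1"
    using closed_switch_recolor_edge[OF p2 cut2(1) col1(1)] by metis
  have pa: "proper_col G2 da" using rtrancl_closed_switch_proper[OF da(1) p2] .
  obtain db where db: "(da, db) \<in> (closed_switch G2)\<^sup>*" "db e2 = c1 e2"
    and db_other: "\<And>g. da g \<notin> {da e2, c1 e2} \<Longrightarrow> db g = da g"
    using closed_switch_recolor_edge[OF pa cut2(2) col1(2)] by metis
  have pb: "proper_col G2 db" using rtrancl_closed_switch_proper[OF db(1) pa] .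
  have "da e1 \<noteq> da e2" using far.cut_colors_distinct_G1[OF pa] distinct_cut by auto
  then have db1: "db e1 = c1 e1" using db_other[of e1] da(2) dist1 by auto
  have "db e3 \<in> {1,2,3}" using pb by (auto simp: proper_col_def edges_G2)
  moreover have "db e3 \<noteq> db e1" "db e3 \<noteq> db e2"
    using far.cut_colors_distinct_G1[OF pb] distinct_cut by auto
  ultimately have "db e3 = c1 e3" using db1 db(2) col1 dist1 by auto
  then show ?thesis
    using that[of db] da(1) db(1) db1 db(2) by (auto intro: rtrancl_trans)
qed

lemma finite_edges_G1: "finite (edges G1)"
  using cubic_G1 by (simp add: cubic_def wf_graph_def)

lemma glue_colorings:
  assumes c1: "c1 \<in> colorings G1" and c2: "c2 \<in> colorings G2"
  shows "\<exists>c\<in>colorings G. (restrict_col (edges G1) c, c1) \<in> kempe_rel G1 \<and>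
    (restrict_col (edges G2) c, c2) \<in> kempe_rel G2"
proof -
  interpret far: cut3 G S2 S1 e1 e2 e3 y1 y2 y3 x1 x2 x3 v2 v1 G2 G1 by (rule cut3_swap_sides)
  have p1: "proper_col G1 c1" and p2: "proper_col G2 c2" using c1 c2 by (simp_all add: colorings_def)
  obtain d where d: "(c2, d) \<in> (closed_switch G2)\<^sup>*" "\<And>f. f \<in> {e1, e2, e3} \<Longrightarrow> d f = c1 f"
    using align_cut_colors[OF p1 p2] by metis
  have pd: "proper_col G2 d" using rtrancl_closed_switch_proper[OF d(1) p2] .
  define c where "c f = (if f \<in> edges G1 then c1 f else d f)" for f
  have r1: "restrict_col (edges G1) c = c1"
    using p1 by (auto simp: c_def restrict_col_def proper_col_def)
  have r2: "restrict_col (edges G2) c = d"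
    using pd d(2) edges_G1_G2_inter by (auto simp: c_def restrict_col_def proper_col_def)
  have "proper_col G c"
  proof (rule proper_col_if_restrictions)
    show "proper_col G1 (restrict_col (edges G1) c)" "proper_col G2 (restrict_col (edges G2) c)"
      using r1 r2 p1 pd by simp_all
    show "c f = 0" if "f \<notin> edges G" for f
      using that edges_G1_subset far.edges_G1_subset pd by (auto simp: c_def proper_col_def)
  qed
  moreover have "(restrict_col (edges G1) c, c1) \<in> kempe_rel G1"
    using r1 kempe_rel_refl[OF finite_edges_G1 p1] by simp
  moreover have "(c2, d) \<in> kempe_rel G2"
    using d(1) p2 kempe_rel_iff[OF far.finite_edges_G1] by blast
  then have "(restrict_col (edges G2) c, c2) \<in> kempe_rel G2"
    using r2 kempe_rel_sym[OF far.finite_edges_G1] by simp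
  ultimately show ?thesis by (auto simp: colorings_def)
qed

lemma kempe_gluing_G1_G2: "kempe_gluing G G1 G2 (edges G1) (edges G2)"
proof -
  interpret far: cut3 G S2 S1 e1 e2 e3 y1 y2 y3 x1 x2 x3 v2 v1 G2 G1 by (rule cut3_swap_sides)
  show ?thesis
  proof (rule kempe_gluing.intro[OF kempe_restriction_G1 far.kempe_restriction_G1])
    show "kempe_gluing_axioms G G1 G2 (edges G1) (edges G2)"
      by (rule kempe_gluing_axioms.intro) (fact kempe_rel_if_permuted, fact glue_colorings)
  qed
qed

lemma Kp_split: "Kp G = Kp G1 * Kp G2" and cubic_G2: "cubic G2"
proof -
  interpret far: cut3 G S2 S1 e1 e2 e3 y1 y2 y3 x1 x2 x3 v2 v1 G2 G1 by (rule cut3_swap_sides)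
  show "Kp G = Kp G1 * Kp G2" by (rule kempe_gluing.Kp_eq_mult[OF kempe_gluing_G1_G2])
  show "cubic G2" by (rule far.cubic_G1)
qed

end

section \<open>Two-edge cuts\<close>

locale cut2 = cubic_cut G S1 S2 "{e1, e2}"
  for G :: mgraph and S1 S2 :: "nat set" and e1 e2 :: nat +
  fixes x1 x2 y1 y2 :: nat and G1 G2 :: mgraph
  assumes distinct_cut: "e1 \<noteq> e2"
    and ends_cut: "ends G e1 = {x1, y1}" "ends G e2 = {x2, y2}"
    and near_ends: "x1 \<in> S1" "x2 \<in> S1" and far_ends: "y1 \<in> S2" "y2 \<in> S2"
    and near_distinct: "x1 \<noteq> x2" and far_distinct: "y1 \<noteq> y2"
    and G1_def: "G1 = \<lparr>verts = S1, edges = inside G S1 \<union> {e1}, ends = (ends G)(e1 := {x1, x2})\<rparr>"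
    and G2_def: "G2 = \<lparr>verts = S2, edges = inside G S2 \<union> {e1}, ends = (ends G)(e1 := {y1, y2})\<rparr>"
begin

lemma cut2_swap_sides: "cut2 G S2 S1 e1 e2 y1 y2 x1 x2 G2 G1"
  unfolding cut2_def cut2_axioms_def
  using swap_sides distinct_cut ends_cut near_ends far_ends near_distinct far_distinct G1_def G2_def
  by (simp add: insert_commute)

text \<open>The two cut edges are merged into the single edge \<open>e1\<close> of \<open>G1\<close>; \<open>psi\<close> sends every
  edge of \<open>G\<close> to the edge representing it there.\<close>

definition psi :: "nat \<Rightarrow> nat" where
  "psi f = (if f = e2 then e1 else f)"

lemma edges_G1: "edges G1 = inside G S1 \<union> {e1}"
  by (simp add: G1_def)

lemma edges_G2: "edges G2 = inside G S2 \<union> {e1}"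
  by (simp add: G2_def)

lemma ends_G1: "ends G1 = (ends G)(e1 := {x1, x2})"
  by (simp add: G1_def)

lemma e2_notin_G1: "e2 \<notin> edges G1"
  using cut_not_inside distinct_cut by (auto simp: edges_G1)

lemma edges_G1_subset: "edges G1 \<subseteq> edges G"
  using cut_subset_edges by (auto simp: edges_G1 inside_def)

lemma edges_G1_G2_inter: "f \<in> edges G1 \<Longrightarrow> f \<in> edges G2 \<Longrightarrow> f = e1"
  using inside_disjoint by (auto simp: edges_G1 edges_G2)

lemma edges_G1_G2_cover: "f \<in> edges G \<Longrightarrow> f \<in> edges G1 \<or> f \<in> edges G2 \<or> f = e2"
  using edge_cases by (auto simp: edges_G1 edges_G2)

lemma ends_G1_subset: "f \<in> edges G1 \<Longrightarrow> ends G1 f \<subseteq> S1"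
  using near_ends by (auto simp: edges_G1 ends_G1 inside_def)

lemma ends_G1_lift:
  assumes "f \<in> edges G1" "w \<in> ends G1 f"
  shows "\<exists>f'. (f' = f \<or> (f = e1 \<and> f' = e2)) \<and> w \<in> ends G f'"
proof (cases "f = e1")
  case True
  then show ?thesis using assms(2) ends_cut by (auto simp: ends_G1)
next
  case False
  then show ?thesis using assms(2) by (auto simp: ends_G1)
qed

lemma ends_G1_psi:
  assumes f: "f \<in> edges G" and w: "w \<in> ends G f" "w \<in> S1"
  shows "psi f \<in> edges G1" "w \<in> ends G1 (psi f)"
proof -
  have "f \<in> inside G S1 \<or> f \<in> {e1, e2}"
    using edge_cases[OF f] w disjoint by (auto simp: inside_def)
  moreover have "ends G e1 \<inter> S1 = {x1}" "ends G e2 \<inter> S1 = {x2}"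
    using ends_cut near_ends far_ends disjoint by auto
  ultimately show "psi f \<in> edges G1" "w \<in> ends G1 (psi f)"
    using w cut_not_inside distinct_cut by (auto simp: psi_def ends_G1 edges_G1)
qed

lemma psi_inj_near:
  assumes "f \<noteq> g" "w \<in> ends G f" "w \<in> ends G g" "w \<in> S1"
  shows "psi f \<noteq> psi g"
proof
  assume "psi f = psi g"
  then have "{f, g} = {e1, e2}" using assms(1) by (auto simp: psi_def split: if_splits)
  then have "w \<in> ends G e1 \<inter> ends G e2 \<inter> S1" using assms(2-4) by auto
  then show False using ends_cut near_ends far_ends disjoint near_distinct by auto
qed

lemma cut_colors_eq_by_parity:
  assumes p: "proper_col G c"
  shows "c e1 = c e2"
proof -
  have col: "c e1 \<in> {1,2,3}" "c e2 \<in> {1,2,3}"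
    using p cut_subset_edges by (auto simp: proper_col_def)
  have "(of_bool (c e1 = k) + of_bool (c e2 = k)) mod 2 = card S1 mod 2"
    if "k \<in> {1,2,3}" for k :: nat
  proof -
    have "of_bool (c e1 = k) + of_bool (c e2 = k) = (\<Sum>e\<in>{e1, e2}. of_bool (c e = k) :: nat)"
      using distinct_cut by simp
    also have "\<dots> = card {e\<in>{e1, e2}. c e = k}" by (simp add: Int_def)
    finally show ?thesis using card_cut_color_mod2[OF p that] by simp
  qed
  then show ?thesis using eq_if_color_counts_same_parity[OF col] by blast
qed

lemma col_psi: "proper_col G c \<Longrightarrow> c (psi f) = c f"
  using cut_colors_eq_by_parity by (simp add: psi_def)

lemma proper_col_restrict_G1:
  assumes p: "proper_col G c"
  shows "proper_col G1 (restrict_col (edges G1) c)"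
  unfolding proper_col_def
proof (intro conjI allI impI ballI)
  fix e assume "e \<in> edges G1"
  then show "restrict_col (edges G1) c e \<in> {1,2,3}"
    using p edges_G1_subset by (auto simp: restrict_col_def proper_col_def)
next
  fix e f assume e: "e \<in> edges G1" and f: "f \<in> edges G1"
    and ef: "e \<noteq> f \<and> ends G1 e \<inter> ends G1 f \<noteq> {}"
  then obtain w where w: "w \<in> ends G1 e" "w \<in> ends G1 f" by blast
  obtain e' where e': "e' = e \<or> (e = e1 \<and> e' = e2)" "w \<in> ends G e'" using ends_G1_lift[OF e w(1)] by blast
  obtain f' where f': "f' = f \<or> (f = e1 \<and> f' = e2)" "w \<in> ends G f'" using ends_G1_lift[OF f w(2)] by blast
  have "e' \<noteq> f'" using e' f' ef e f e2_notin_G1 by auto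
  moreover have "e' \<in> edges G" "f' \<in> edges G" using e' f' e f edges_G1_subset cut_subset_edges by auto
  ultimately have "c e' \<noteq> c f'" using p e'(2) f'(2) unfolding proper_col_def by blast
  moreover have "c e' = c e" "c f' = c f" using e' f' cut_colors_eq_by_parity[OF p] by auto
  ultimately show "restrict_col (edges G1) c e \<noteq> restrict_col (edges G1) c f"
    using e f by (simp add: restrict_col_def)
qed (simp add: restrict_col_def)

text \<open>Otherwise the switch on \<open>U\<close> would give the two cut edges different colors.\<close>

lemma kempe_closed_cut_edges:
  assumes p: "proper_col G c" and ab: "a \<in> {1,2,3}" "b \<in> {1,2,3}" "a \<noteq> b"
    and cl: "kempe_closed G c a b U"
  shows "e1 \<in> U \<longleftrightarrow> e2 \<in> U"
proof (rule ccontr)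
  assume h: "\<not> (e1 \<in> U \<longleftrightarrow> e2 \<in> U)"
  have same: "c e1 = c e2" using cut_colors_eq_by_parity[OF p] .
  with h cl have "c e1 \<in> {a,b}" by (auto simp: kempe_closed_def)
  with h same ab(3) have "kempe_swap c a b U e1 \<noteq> kempe_swap c a b U e2"
    by (auto simp: kempe_swap_def)
  then show False using cut_colors_eq_by_parity[OF proper_col_kempe_swap[OF p ab(1,2) cl]] by blast
qed

lemma kempe_closed_restrict_G1:
  assumes p: "proper_col G c" and ab: "a \<in> {1,2,3}" "b \<in> {1,2,3}" "a \<noteq> b"
    and cl: "kempe_closed G c a b U"
  shows "kempe_closed G1 (restrict_col (edges G1) c) a b (U \<inter> edges G1)"
  unfolding kempe_closed_def
proof (intro conjI ballI impI)
  show "U \<inter> edges G1 \<subseteq> {e \<in> edges G1. restrict_col (edges G1) c e \<in> {a, b}}"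
    using cl by (auto simp: kempe_closed_def restrict_col_def)
next
  fix f g assume f: "f \<in> U \<inter> edges G1" and g: "g \<in> edges G1"
    and fg: "restrict_col (edges G1) c g \<in> {a, b} \<and> ends G1 f \<inter> ends G1 g \<noteq> {}"
  have cg: "c g \<in> {a,b}" using fg g by (simp add: restrict_col_def)
  have cut: "e1 \<in> U \<longleftrightarrow> e2 \<in> U" using kempe_closed_cut_edges[OF p ab cl] .
  obtain w where w: "w \<in> ends G1 f" "w \<in> ends G1 g" using fg by blast
  obtain f' where f': "f' = f \<or> (f = e1 \<and> f' = e2)" "w \<in> ends G f'"
    using ends_G1_lift[OF _ w(1)] f by blast
  obtain g' where g': "g' = g \<or> (g = e1 \<and> g' = e2)" "w \<in> ends G g'"
    using ends_G1_lift[OF g w(2)] by blast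
  have "f' \<in> U" using f' f cut by auto
  moreover have "g' \<in> edges G" "c g' = c g"
    using g' g edges_G1_subset cut_subset_edges cut_colors_eq_by_parity[OF p] by auto
  ultimately have "g' \<in> U" using cl cg f'(2) g'(2) unfolding kempe_closed_def by blast
  then show "g \<in> U \<inter> edges G1" using g g' cut by auto
qed

definition lift_closed :: "(nat \<Rightarrow> nat) \<Rightarrow> nat \<Rightarrow> nat \<Rightarrow> nat set \<Rightarrow> nat set" where
  "lift_closed c a b V = V \<union> (if e1 \<in> V then {f\<in>inside G S2 \<union> {e2}. c f \<in> {a,b}} else {})"

lemma kempe_closed_lift_closed:
  assumes p: "proper_col G c" and cl: "kempe_closed G1 (restrict_col (edges G1) c) a b V"
  shows "kempe_closed G c a b (lift_closed c a b V)"
  unfolding kempe_closed_def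
proof (intro conjI ballI impI)
  have V: "V \<subseteq> edges G1" "\<And>f. f \<in> V \<Longrightarrow> c f \<in> {a,b}"
    using cl by (auto simp: kempe_closed_def restrict_col_def)
  then show "lift_closed c a b V \<subseteq> {e\<in>edges G. c e \<in> {a,b}}"
    using edges_G1_subset cut_subset_edges by (auto simp: lift_closed_def inside_def)
  fix f g assume f: "f \<in> lift_closed c a b V" and g: "g \<in> edges G"
    and fg: "c g \<in> {a,b} \<and> ends G f \<inter> ends G g \<noteq> {}"
  then obtain w where w: "w \<in> ends G f" "w \<in> ends G g" by blast
  have fE: "f \<in> edges G" using f V edges_G1_subset cut_subset_edges
    by (auto simp: lift_closed_def inside_def split: if_splits)
  have "w \<in> S1 \<or> w \<in> S2" using w ends_subset[OF fE] by blast
  then show "g \<in> lift_closed c a b V"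
  proof
    assume wS1: "w \<in> S1"
    have "f \<in> V \<and> f \<noteq> e2 \<or> (f = e2 \<and> e1 \<in> V)"
      using f w(1) wS1 disjoint V(1) e2_notin_G1
      by (auto simp: lift_closed_def inside_def split: if_splits)
    then have "psi f \<in> V" by (auto simp: psi_def)
    moreover have "psi g \<in> edges G1" "ends G1 (psi f) \<inter> ends G1 (psi g) \<noteq> {}"
      using ends_G1_psi[OF fE w(1) wS1] ends_G1_psi[OF g w(2) wS1] by auto
    moreover have "restrict_col (edges G1) c (psi g) \<in> {a,b}"
      using fg col_psi[OF p] \<open>psi g \<in> edges G1\<close> by (simp add: restrict_col_def)
    ultimately have "psi g \<in> V" using cl unfolding kempe_closed_def by blast
    then show ?thesis using fg by (auto simp: lift_closed_def psi_def split: if_splits)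
  next
    assume wS2: "w \<in> S2"
    have "f \<notin> inside G S1" using w(1) wS2 disjoint by (auto simp: inside_def)
    then have e1V: "e1 \<in> V"
      using f V(1) by (auto simp: lift_closed_def edges_G1 split: if_splits)
    have "g \<notin> inside G S1" using w(2) wS2 disjoint by (auto simp: inside_def)
    then have "g = e1 \<or> g \<in> inside G S2 \<union> {e2}" using edge_cases[OF g] by blast
    then show ?thesis using e1V fg by (auto simp: lift_closed_def)
  qed
qed

lemma lift_closed_inter_G1:
  assumes cl: "kempe_closed G1 (restrict_col (edges G1) c) a b V"
  shows "lift_closed c a b V \<inter> edges G1 = V"
proof -
  have "V \<subseteq> edges G1" using cl by (auto simp: kempe_closed_def)
  moreover have "(inside G S2 \<union> {e2}) \<inter> edges G1 = {}"
    using inside_disjoint cut_not_inside e2_notin_G1 by (auto simp: edges_G1)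
  ultimately show ?thesis by (auto simp: lift_closed_def)
qed

lemma lift_closed_inter_G2:
  assumes cl: "kempe_closed G1 (restrict_col (edges G1) c) a b V"
  shows "lift_closed c a b V \<inter> edges G2 = {} \<or>
    lift_closed c a b V \<inter> edges G2 = {f\<in>edges G2. c f \<in> {a,b}}"
proof -
  have V: "V \<subseteq> edges G1" "\<And>f. f \<in> V \<Longrightarrow> c f \<in> {a,b}"
    using cl by (auto simp: kempe_closed_def restrict_col_def)
  have "e2 \<notin> edges G2" using cut_not_inside distinct_cut by (auto simp: edges_G2)
  then show ?thesis
    using V edges_G1_G2_inter by (auto simp: lift_closed_def edges_G2)
qed

lemma card_incident_G1:
  assumes v: "v \<in> S1"
  shows "card {e\<in>edges G1. v \<in> ends G1 e} = card {e\<in>edges G. v \<in> ends G e}"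
proof -
  let ?A = "{e\<in>edges G. v \<in> ends G e}" and ?B = "{e\<in>edges G1. v \<in> ends G1 e}"
  have "bij_betw psi ?A ?B"
  proof (rule bij_betw_imageI)
    show "inj_on psi ?A" using psi_inj_near v by (auto intro: inj_onI)
    show "psi ` ?A = ?B"
    proof
      show "psi ` ?A \<subseteq> ?B" using ends_G1_psi v by blast
      show "?B \<subseteq> psi ` ?A"
      proof
        fix g assume g: "g \<in> ?B"
        then obtain g' where g': "g' = g \<or> (g = e1 \<and> g' = e2)" "v \<in> ends G g'"
          using ends_G1_lift by blast
        then have "g' \<in> ?A" "psi g' = g"
          using g edges_G1_subset cut_subset_edges e2_notin_G1 by (auto simp: psi_def)
        then show "g \<in> psi ` ?A" by blast
      qed
    qed
  qed
  then show ?thesis by (simp add: bij_betw_same_card)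
qed

lemma cubic_G1: "cubic G1"
  unfolding cubic_def wf_graph_def degree_def
proof (intro conjI ballI)
  have "finite (verts G)" using cubic by (simp add: cubic_def wf_graph_def)
  then show "finite (verts G1)" using cover by (simp add: G1_def) (metis finite_Un)
  show "finite (edges G1)" using finite_edges edges_G1_subset by (rule finite_subset[rotated])
next
  fix e assume e: "e \<in> edges G1"
  show "ends G1 e \<subseteq> verts G1" using ends_G1_subset[OF e] by (simp add: G1_def)
  show "card (ends G1 e) = 2"
  proof (cases "e = e1")
    case True then show ?thesis using near_distinct by (simp add: ends_G1)
  next
    case False
    then have "e \<in> inside G S1" using e by (simp add: edges_G1)
    with False show ?thesis using card_ends by (auto simp: ends_G1 inside_def)
  qed
next
  fix v assume "v \<in> verts G1"
  then have "v \<in> S1" by (simp add: G1_def)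
  then show "card {e\<in>edges G1. v \<in> ends G1 e} = 3"
    using card_incident_G1 cubic cover by (auto simp: cubic_def degree_def)
qed

lemma kempe_restriction_G1: "kempe_restriction G G1 (edges G1) (edges G2)"
proof
  show "finite (edges G)" "finite (edges G1)"
    using finite_edges cubic_G1 by (simp_all add: cubic_def wf_graph_def)
  show "proper_col G1 (restrict_col (edges G1) c)" if "proper_col G c" for c
    by (rule proper_col_restrict_G1[OF that])
  show "kempe_closed G1 (restrict_col (edges G1) c) a b (U \<inter> edges G1)"
    if "proper_col G c" "a \<in> {1,2,3}" "b \<in> {1,2,3}" "a \<noteq> b" "kempe_closed G c a b U"
    for c a b U
    by (rule kempe_closed_restrict_G1[OF that])
  show "\<exists>U. kempe_closed G c a b U \<and> U \<inter> edges G1 = V \<and>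
      (U \<inter> edges G2 = {} \<or> U \<inter> edges G2 = {f\<in>edges G2. c f \<in> {a,b}})"
    if "proper_col G c" "kempe_closed G1 (restrict_col (edges G1) c) a b V" for c a b V
    using kempe_closed_lift_closed[OF that] lift_closed_inter_G1[OF that(2)]
      lift_closed_inter_G2[OF that(2)] by blast
qed

lemma col_eq_if_restrictions_eq:
  assumes p: "proper_col G c" "proper_col G d"
    and r: "restrict_col (edges G1) c = restrict_col (edges G1) d"
      "restrict_col (edges G2) c = restrict_col (edges G2) d"
  shows "c = d"
proof
  fix f
  have e1: "c e1 = d e1" using fun_cong[OF r(1), of e1] by (simp add: restrict_col_def edges_G1)
  consider "f \<in> edges G1" | "f \<in> edges G2" | "f = e2" | "f \<notin> edges G"
    using edges_G1_G2_cover by blast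
  then show "c f = d f"
  proof cases
    case 1 then show ?thesis using fun_cong[OF r(1), of f] by (simp add: restrict_col_def)
  next
    case 2 then show ?thesis using fun_cong[OF r(2), of f] by (simp add: restrict_col_def)
  next
    case 3 then show ?thesis using e1 cut_colors_eq_by_parity p by metis
  next
    case 4 then show ?thesis using p by (simp add: proper_col_def)
  qed
qed

lemma kempe_closed_near:
  assumes "c e1 \<notin> {a,b}" "c e2 \<notin> {a,b}"
  shows "kempe_closed G c a b {f\<in>inside G S1. c f \<in> {a,b}}"
  unfolding kempe_closed_def
proof (intro conjI ballI impI)
  fix f g assume f: "f \<in> {f\<in>inside G S1. c f \<in> {a,b}}" and g: "g \<in> edges G"
    and fg: "c g \<in> {a,b} \<and> ends G f \<inter> ends G g \<noteq> {}"
  then have "ends G g \<inter> S1 \<noteq> {}" by (auto simp: inside_def)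
  then have "g \<in> inside G S1 \<or> g \<in> {e1, e2}"
    using edge_cases[OF g] disjoint by (auto simp: inside_def)
  then show "g \<in> {f\<in>inside G S1. c f \<in> {a,b}}" using fg assms by auto
qed (auto simp: inside_def)

lemma eq_kempe_swap_near:
  assumes pd: "proper_col G d" and pc: "proper_col G c"
    and r2: "restrict_col (edges G2) d = restrict_col (edges G2) c"
    and r1: "restrict_col (edges G1) d = transpose a b \<circ> restrict_col (edges G1) c"
    and ab: "c e1 \<notin> {a,b}"
  shows "d = kempe_swap c a b {f\<in>inside G S1. c f \<in> {a,b}}"
proof
  fix f
  show "d f = kempe_swap c a b {f\<in>inside G S1. c f \<in> {a,b}} f"
  proof (cases "f \<in> edges G1")
    case True
    then have "d f = transpose a b (c f)" using fun_cong[OF r1, of f] by (simp add: restrict_col_def)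
    then show ?thesis
      using True ab cut_not_inside by (auto simp: kempe_swap_apply edges_G1 transpose_def)
  next
    case False
    have e1: "d e1 = c e1" using fun_cong[OF r2, of e1] by (simp add: restrict_col_def edges_G2)
    consider "f \<in> edges G2" | "f = e2" | "f \<notin> edges G" using edges_G1_G2_cover False by blast
    then have "d f = c f"
    proof cases
      case 1 then show ?thesis using fun_cong[OF r2, of f] by (simp add: restrict_col_def)
    next
      case 2 then show ?thesis using e1 cut_colors_eq_by_parity pc pd by metis
    next
      case 3 then show ?thesis using pc pd by (simp add: proper_col_def)
    qed
    with False show ?thesis by (simp add: kempe_swap_apply edges_G1)
  qed
qed

lemma kempe_rel_if_permuted:
  assumes pd: "proper_col G d" and pc: "proper_col G c"
    and r2: "restrict_col (edges G2) d = restrict_col (edges G2) c"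
    and \<pi>: "\<pi> permutes {1,2,3}" and r1: "restrict_col (edges G1) d = \<pi> \<circ> restrict_col (edges G1) c"
  shows "(d, c) \<in> kempe_rel G"
proof -
  have "d e1 = c e1" using fun_cong[OF r2, of e1] by (simp add: restrict_col_def edges_G2)
  then have fix_k: "\<pi> (c e1) = c e1" using fun_cong[OF r1, of e1] by (simp add: restrict_col_def edges_G1)
  have "c e1 \<in> {1,2,3}" using pc cut_subset_edges by (auto simp: proper_col_def)
  then obtain a b where kab: "{c e1, a, b} = {1,2,3}" "a \<noteq> b" "a \<noteq> c e1" "b \<noteq> c e1"
    by (rule obtain_other_colors)
  have "\<pi> permutes {c e1, a, b}" using \<pi> by (simp only: kab(1))
  from permutes_three_fixing[OF this kab(2-4) fix_k] show ?thesis
  proof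
    assume "\<pi> = id"
    then have "d = c" using col_eq_if_restrictions_eq[OF pd pc _ r2] r1 by simp
    then show ?thesis using kempe_rel_refl[OF finite_edges pc] by simp
  next
    assume "\<pi> = transpose a b"
    then have "d = kempe_swap c a b {f\<in>inside G S1. c f \<in> {a,b}}"
      using eq_kempe_swap_near[OF pd pc r2] r1 kab by auto
    moreover have "kempe_closed G c a b {f\<in>inside G S1. c f \<in> {a,b}}"
      using kempe_closed_near cut_colors_eq_by_parity[OF pc] kab by auto
    ultimately have "(c, d) \<in> closed_switch G"
      using pc kab unfolding closed_switch_def by blast
    then show ?thesis
      using kempe_rel_sym[OF finite_edges kempe_rel_if_closed_switch[OF finite_edges]] by blast
  qed
qed

lemma col_differs_near:
  assumes p: "proper_col G1 (restrict_col (edges G1) c)" and same: "c e2 = c e1"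
    and fg: "f \<in> edges G" "g \<in> edges G" "f \<noteq> g"
    and w: "w \<in> ends G f" "w \<in> ends G g" "w \<in> S1"
  shows "c f \<noteq> c g"
proof -
  note f1 = ends_G1_psi[OF fg(1) w(1,3)] and g1 = ends_G1_psi[OF fg(2) w(2,3)]
  have "psi f \<noteq> psi g" using psi_inj_near[OF fg(3) w] .
  then have "restrict_col (edges G1) c (psi f) \<noteq> restrict_col (edges G1) c (psi g)"
    using p f1 g1 unfolding proper_col_def by blast
  then show ?thesis using f1(1) g1(1) same by (simp add: restrict_col_def psi_def split: if_splits)
qed

lemma proper_col_if_restrictions:
  assumes p1: "proper_col G1 (restrict_col (edges G1) c)" and p2: "proper_col G2 (restrict_col (edges G2) c)"
    and same: "c e2 = c e1" and zero: "\<And>f. f \<notin> edges G \<Longrightarrow> c f = 0"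
  shows "proper_col G c"
  unfolding proper_col_def
proof (intro conjI allI impI ballI)
  fix f assume "f \<in> edges G"
  then consider "f \<in> edges G1" | "f \<in> edges G2" | "f = e2" using edges_G1_G2_cover by blast
  then show "c f \<in> {1,2,3}"
    using p1 p2 same by cases (auto simp: proper_col_def restrict_col_def edges_G1)
next
  interpret far: cut2 G S2 S1 e1 e2 y1 y2 x1 x2 G2 G1 by (rule cut2_swap_sides)
  fix f g assume f: "f \<in> edges G" and g: "g \<in> edges G" and fg: "f \<noteq> g \<and> ends G f \<inter> ends G g \<noteq> {}"
  then obtain w where w: "w \<in> ends G f" "w \<in> ends G g" by blast
  then have "w \<in> S1 \<or> w \<in> S2" using ends_subset[OF f] by blast
  then show "c f \<noteq> c g"
    using col_differs_near[OF p1 same f g _ w] far.col_differs_near[OF p2 same f g _ w] fg by blast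
qed (use zero in blast)

lemma finite_edges_G1: "finite (edges G1)"
  using cubic_G1 by (simp add: cubic_def wf_graph_def)

lemma glue_colorings:
  assumes c1: "c1 \<in> colorings G1" and c2: "c2 \<in> colorings G2"
  shows "\<exists>c\<in>colorings G. (restrict_col (edges G1) c, c1) \<in> kempe_rel G1 \<and>
    (restrict_col (edges G2) c, c2) \<in> kempe_rel G2"
proof -
  interpret far: cut2 G S2 S1 e1 e2 y1 y2 x1 x2 G2 G1 by (rule cut2_swap_sides)
  have p1: "proper_col G1 c1" and p2: "proper_col G2 c2" using c1 c2 by (simp_all add: colorings_def)
  have "e1 \<in> edges G2" "c1 e1 \<in> {1,2,3}" using p1 by (auto simp: edges_G1 edges_G2 proper_col_def)
  then obtain d where d: "(c2, d) \<in> (closed_switch G2)\<^sup>*" "d e1 = c1 e1"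
    using closed_switch_recolor_edge[OF p2] by metis
  have pd: "proper_col G2 d" using rtrancl_closed_switch_proper[OF d(1) p2] .
  define c where "c f = (if f \<in> edges G1 then c1 f else if f = e2 then c1 e1 else d f)" for f
  have r1: "restrict_col (edges G1) c = c1"
    using p1 by (auto simp: c_def restrict_col_def proper_col_def)
  have r2: "restrict_col (edges G2) c = d"
  proof
    fix f show "restrict_col (edges G2) c f = d f"
      using pd d(2) edges_G1_G2_inter[of f] far.e2_notin_G1
      by (auto simp: c_def restrict_col_def proper_col_def)
  qed
  have "proper_col G c"
  proof (rule proper_col_if_restrictions)
    show "proper_col G1 (restrict_col (edges G1) c)" "proper_col G2 (restrict_col (edges G2) c)"
      using r1 r2 p1 pd by simp_all
    show "c e2 = c e1" using e2_notin_G1 by (simp add: c_def edges_G1)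
    show "c f = 0" if "f \<notin> edges G" for f
      using that edges_G1_subset far.edges_G1_subset cut_subset_edges pd
      by (auto simp: c_def proper_col_def)
  qed
  moreover have "(restrict_col (edges G1) c, c1) \<in> kempe_rel G1"
    using r1 kempe_rel_refl[OF finite_edges_G1 p1] by simp
  moreover have "(c2, d) \<in> kempe_rel G2"
    using d(1) p2 kempe_rel_iff[OF far.finite_edges_G1] by blast
  then have "(restrict_col (edges G2) c, c2) \<in> kempe_rel G2"
    using r2 kempe_rel_sym[OF far.finite_edges_G1] by simp
  ultimately show ?thesis by (auto simp: colorings_def)
qed

lemma kempe_gluing_G1_G2: "kempe_gluing G G1 G2 (edges G1) (edges G2)"
proof -
  interpret far: cut2 G S2 S1 e1 e2 y1 y2 x1 x2 G2 G1 by (rule cut2_swap_sides)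
  show ?thesis
  proof (rule kempe_gluing.intro[OF kempe_restriction_G1 far.kempe_restriction_G1])
    show "kempe_gluing_axioms G G1 G2 (edges G1) (edges G2)"
      by (rule kempe_gluing_axioms.intro) (fact kempe_rel_if_permuted, fact glue_colorings)
  qed
qed

lemma Kp_split: "Kp G = Kp G1 * Kp G2" and cubic_G2: "cubic G2"
proof -
  interpret far: cut2 G S2 S1 e1 e2 y1 y2 x1 x2 G2 G1 by (rule cut2_swap_sides)
  show "Kp G = Kp G1 * Kp G2" by (rule kempe_gluing.Kp_eq_mult[OF kempe_gluing_G1_G2])
  show "cubic G2" by (rule far.cubic_G1)
qed

end

section \<open>Decompositions\<close>

lemma Kp_nontrivial_split:
  assumes "cubic H" and "nontrivial_split H H1 H2"
  shows "Kp H = Kp H1 * Kp H2" "cubic H1" "cubic H2"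
proof -
  have "split2 H H1 H2 \<or> split3 H H1 H2" using assms(2) by (simp add: nontrivial_split_def)
  then have "Kp H = Kp H1 * Kp H2 \<and> cubic H1 \<and> cubic H2"
  proof
    assume "split2 H H1 H2"
    then obtain S1 S2 e1 e2 x1 x2 y1 y2 where "cut2 H S1 S2 e1 e2 x1 x2 y1 y2 H1 H2"
      using assms(1) unfolding split2_def cut2_def cut2_axioms_def cubic_cut_def by blast
    then show ?thesis using cut2.Kp_split cut2.cubic_G1 cut2.cubic_G2 by metis
  next
    assume "split3 H H1 H2"
    then obtain S1 S2 e1 e2 e3 x1 x2 x3 y1 y2 y3 v1 v2
      where "cut3 H S1 S2 e1 e2 e3 x1 x2 x3 y1 y2 y3 v1 v2 H1 H2"
      using assms(1) unfolding split3_def cut3_def cut3_axioms_def cubic_cut_def by blast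
    then show ?thesis using cut3.Kp_split cut3.cubic_G1 cut3.cubic_G2 by metis
  qed
  then show "Kp H = Kp H1 * Kp H2" "cubic H1" "cubic H2" by simp_all
qed

lemma decomposition_cubic_Kp:
  assumes "decomposition G M" and "cubic G"
  shows "(\<forall>H\<in>#M. cubic H) \<and> Kp G = (\<Prod>H\<in>#M. Kp H)"
  using assms
proof (induction rule: decomposition.induct)
  case base
  then show ?case by simp
next
  case (step M H H1 H2)
  then have IH: "\<forall>H\<in>#M. cubic H" "Kp G = (\<Prod>H\<in>#M. Kp H)" by auto
  then have "cubic H" using step.hyps(2) by blast
  note split = Kp_nontrivial_split[OF this step.hyps(3)]
  have "(\<Prod>H\<in>#M. Kp H) = Kp H * (\<Prod>H\<in>#(M - {#H#}). Kp H)"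
    using step.hyps(2) by (metis insert_DiffM prod_mset.insert)
  also have "\<dots> = (\<Prod>H\<in>#(M - {#H#} + {#H1, H2#}). Kp H)"
    using split(1) by (simp add: ac_simps)
  finally show ?case using IH split(2,3) by (auto dest: in_diffD)
qed

theorem theorem13:
  assumes "cubic G" and "colorable3 G" and "decomposition G M"
  shows "Kp G = (\<Prod>H\<in>#M. Kp H)"
  using decomposition_cubic_Kp[OF assms(3,1)] by blast

end
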